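(* The complex $$\cdots\xrightarrow{Q}\frac{\mathcal{D}\otimes H^\ast_{-5}}{C(\mathcal{D}\otimes H^\ast_{-9})}\xrightarrow{Q}\frac{\mathcal{D}\otimes H^\ast_{-3}}{C(\mathcal{D}\otimes H^\ast_{-7})}\xrightarrow{Q}\frac{\mathcal{D}\otimes H^\ast_{-1}}{C(\mathcal{D}\otimes H^\ast_{-5})}\longrightarrow B\longrightarrow0,$$ where the last map is the natural projection and $B=\dfrac{\mathcal{D}\otimes H^\ast_{-1}}{Q(\mathcal{D}\otimes H^\ast_{-3})+C(\mathcal{D}\otimes H^\ast_{-5})}$, is exact.
   Context: $\mathcal{D}=\mathbb{C}[\partial_1,\partial_3,\partial_5,\ldots]$ is a polynomial ring in commuting variables $\partial_{2n-1}$, $n\ge1$. Fermions $\psi_n,\psi^\ast_n$ ($n\in2\mathbb{Z}+1$) satisfy $[\psi_m,\psi_n]_+=[\psi^\ast_m,\psi^\ast_n]_+=0$, $[\psi^\ast_m,\psi_n]_+=\delta_{mn}$ ($[X,Y]_+=XY+YX$). For odd $m$ the bra vacuum $\langle m|$ satisfies $\langle m|\psi_n=0$ for $n\le m$, $\langle m|\psi^\ast_n=0$ for $n>m$, $\langle m-2|\psi_m=\langle m|$; $H^\ast_m$ is the Fock space of bra vectors obtained from $\langle m|$ by right multiplication with products of equal numbers of $\psi$'s and $\psi^\ast$'s. Fermion operators act on $\mathcal{D}\otimes H^\ast_m$ on the second factor from the right, $\mathcal{D}$-linearly. Define $Q:\mathcal{D}\otimes H^\ast_m\to\mathcal{D}\otimes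 H^\ast_{m+2}$ by $Q(P\otimes v)=\sum_{n\ge1}\partial_{2n-1}P\otimes v\,\psi_{-(2n-1)}$; $Q^2=0$. For $n,l\ge1$ let $P_{n,l}(\partial)=\sum_{i+j=l+1,\ 1\le j<n,\ i\ge1}\frac{1}{n-j}\partial_{2i-1}\partial_{2j-1}\in\mathcal{D}$, and define the $\mathcal{D}$-linear combinations of fermions $\tilde\psi_{-(2n-1)}=\psi_{-(2n-1)}$, $\tilde\psi_{2n-1}=2(2n-1)\psi_{2n-1}-\sum_{l\ge1}P_{n,l}(\partial)\psi_{2n-1-2l}$ ($n\ge1$). Define $C:\mathcal{D}\otimes H^\ast_m\to\mathcal{D}\otimes H^\ast_{m+4}$ by right multiplication with $\sum_{n\ge1}\tilde\psi_{2n-1}\tilde\psi_{-(2n-1)}$, the coefficients $P_{n,l}(\partial)$ multiplying the $\mathcal{D}$-factor. Then $Q$ and $C$ commute, so $Q$ induces maps between the quotients displayed. *)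

theory Defs
  imports Complex_Main "HOL-Library.Poly_Mapping"
begin

text \<open>The ring D = C[d_1, d_3, d_5, ...]: polynomials in countably many commuting
  variables, as finitely supported functions from monomials to complex numbers.
  The monomial key k (a nat) stands for the variable d_(2k+1).\<close>

type_synonym Dring = "(nat \<Rightarrow>\<^sub>0 nat) \<Rightarrow>\<^sub>0 complex"

text \<open>The variable d_(2n-1), n >= 1.\<close>
definition dvar :: "nat \<Rightarrow> Dring" where
  "dvar n = Poly_Mapping.single (Poly_Mapping.single (n - 1) 1) 1"

text \<open>Basis bra vectors are labelled by sets S of odd integers: right multiplication
  by psi_n inserts n, by psi*_n removes n.  The vacuum bra <m| is the set of odd
  integers <= m.  D tensor (fermionic Fock space) = finitely supported maps from
  labels to D.\<close>

type_synonym fock = "int set \<Rightarrow>\<^sub>0 Dring"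

definition vac :: "int \<Rightarrow> int set" where
  "vac m = {x. odd x \<and> x \<le> m}"

text \<open>S labels a basis vector of H*_m.\<close>
definition charge_state :: "int \<Rightarrow> int set \<Rightarrow> bool" where
  "charge_state m S \<longleftrightarrow> (\<forall>x\<in>S. odd x) \<and> finite (S - vac m) \<and> finite (vac m - S)
     \<and> card (S - vac m) = card (vac m - S)"

definition DH :: "int \<Rightarrow> fock set" where
  "DH m = {f. \<forall>S\<in>Poly_Mapping.keys f. charge_state m S}"

text \<open>Jordan-Wigner sign: (-1)^(number of elements of S above n).\<close>
definition fsign :: "int set \<Rightarrow> int \<Rightarrow> Dring \<Rightarrow> Dring" where
  "fsign S n c = (if even (card {j\<in>S. n < j}) then c else - c)"

definition dmul :: "Dring \<Rightarrow> fock \<Rightarrow> fock" where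
  "dmul d f = Poly_Mapping.map (\<lambda>c. d * c) f"

definition rpsi :: "int \<Rightarrow> fock \<Rightarrow> fock" where
  "rpsi n f = (\<Sum>S\<in>Poly_Mapping.keys f. if n \<in> S then 0
                 else Poly_Mapping.single (insert n S) (fsign S n (Poly_Mapping.lookup f S)))"

definition rpsistar :: "int \<Rightarrow> fock \<Rightarrow> fock" where
  "rpsistar n f = (\<Sum>S\<in>Poly_Mapping.keys f. if n \<in> S
                 then Poly_Mapping.single (S - {n}) (fsign (S - {n}) n (Poly_Mapping.lookup f S)) else 0)"

text \<open>Sum of a family with finitely many nonzero terms (the infinite sums in the
  paper have only finitely many nonzero terms on each vector).\<close>
definition fsum :: "(nat \<Rightarrow> 'a::comm_monoid_add) \<Rightarrow> 'a" where
  "fsum g = sum g {n. g n \<noteq> 0}"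

definition Qop :: "fock \<Rightarrow> fock" where
  "Qop f = fsum (\<lambda>n. if 1 \<le> n then dmul (dvar n) (rpsi (- (2 * int n - 1)) f) else 0)"

definition Pcoef :: "nat \<Rightarrow> nat \<Rightarrow> Dring" where
  "Pcoef n l = (\<Sum>j\<in>{j. 1 \<le> j \<and> j < n \<and> j \<le> l}.
       Poly_Mapping.single 0 (1 / of_nat (n - j)) * dvar (l + 1 - j) * dvar j)"

definition rpsitilde_pos :: "nat \<Rightarrow> fock \<Rightarrow> fock" where
  "rpsitilde_pos n f =
     dmul (Poly_Mapping.single 0 (2 * (2 * of_nat n - 1))) (rpsi (2 * int n - 1) f)
     - fsum (\<lambda>l. if 1 \<le> l then dmul (Pcoef n l) (rpsi (2 * int n - 1 - 2 * int l) f) else 0)"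

text \<open>C = right multiplication by sum_(n>=1) psi~_(2n-1) psi~_(-(2n-1)),
  where psi~_(-(2n-1)) = psi_(-(2n-1)).\<close>
definition Cop :: "fock \<Rightarrow> fock" where
  "Cop f = fsum (\<lambda>n. if 1 \<le> n then rpsi (- (2 * int n - 1)) (rpsitilde_pos n f) else 0)"

end

theory Submission
  imports Defs
begin

text \<open>
  For \<open>m \<le> -3\<close> three facts make the complex exact.
  First, \<open>Q\<^sup>2 = 0\<close> and \<open>Q C = C Q\<close>, since all fermions involved anticommute.
  Second, \<open>Q\<close> is exact on \<open>\<D> \<otimes> H\<^sup>*\<^sub>m\<close>: for \<open>H = \<Sum>\<^sub>n \<psi>\<^sup>*\<^bsub>-(2n-1)\<^esub> \<partial>/\<partial>(\<partial>\<^bsub>2n-1\<^esub>)\<close> the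
  operator \<open>Q H + H Q\<close> multiplies a monomial of degree \<open>d\<close> in a state with \<open>h\<close> holes among
  the negative modes by \<open>d + h\<close>, and a state of charge below \<open>-1\<close> has a hole.
  Third, \<open>C\<close> is injective there: its part of polynomial degree \<open>0\<close> is
  \<open>E = \<Sum>\<^sub>n 2(2n-1) \<psi>\<^bsub>2n-1\<^esub> \<psi>\<^bsub>-(2n-1)\<^esub>\<close>, which together with
  \<open>F = \<Sum>\<^sub>n \<psi>\<^sup>*\<^bsub>-(2n-1)\<^esub> \<psi>\<^sup>*\<^bsub>2n-1\<^esub> / 2(2n-1)\<close> satisfies \<open>[E, F] = (m + 1)/2\<close> in
  charge \<open>m\<close>, so \<open>E\<close> is injective in negative charge by the lowest-weight argument for
  \<open>sl\<^sub>2\<close>; the rest of \<open>C\<close> raises the degree, so \<open>C\<close> is injective on lowest-degree parts.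
  Now if \<open>Q v = C w\<close>, then \<open>C (Q w) = Q Q v = 0\<close>, so \<open>Q w = 0\<close> and \<open>w = Q w'\<close>; then
  \<open>Q (v - C w') = 0\<close> and \<open>v = Q u + C w'\<close>.
\<close>

section \<open>Right multiplication by fermions\<close>

abbreviation lookup where "lookup \<equiv> poly_mapping.lookup"
abbreviation keys where "keys \<equiv> Poly_Mapping.keys"
abbreviation single where "single \<equiv> Poly_Mapping.single"

lemma fock_eqI: "(\<And>T. lookup f T = lookup g T) \<Longrightarrow> f = (g::fock)"
  by (rule poly_mapping_eqI)

lemma lookup_dmul[simp]: "lookup (dmul d f) T = d * lookup f T"
  unfolding dmul_def by (simp add: map.rep_eq when_def)

lemma fsign_0[simp]: "fsign S x 0 = 0"
  by (simp add: fsign_def)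
lemma fsign_fsign[simp]: "fsign S x (fsign S x c) = c"
  by (simp add: fsign_def)
lemma fsign_neg: "fsign S x (- c) = - fsign S x c"
  by (simp add: fsign_def)
lemma fsign_add: "fsign S x (a + b) = fsign S x a + fsign S x b"
  by (simp add: fsign_def)
lemma fsign_diff: "fsign S x (a - b) = fsign S x a - fsign S x b"
  by (simp add: fsign_def)
lemma fsign_mult: "fsign S x (d * c) = d * fsign S x c"
  by (simp add: fsign_def)
lemma fsign_eq0[simp]: "fsign S x c = 0 \<longleftrightarrow> c = 0"
  by (simp add: fsign_def)

lemma lookup_rpsi: "lookup (rpsi x f) T = (if x \<in> T then fsign (T - {x}) x (lookup f (T - {x})) else 0)"
proof -
  have "lookup (rpsi x f) T = (\<Sum>S\<in>keys f. lookup (if x \<in> S then 0 else single (insert x S) (fsign S x (lookup f S))) T)"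
    unfolding rpsi_def by (simp add: lookup_sum)
  also have "\<dots> = (\<Sum>S\<in>keys f. if S = T - {x} then (if x \<in> T then fsign (T-{x}) x (lookup f (T-{x})) else 0) else 0)"
  proof (rule sum.cong[OF refl])
    fix S assume "S \<in> keys f"
    show "lookup (if x \<in> S then 0 else single (insert x S) (fsign S x (lookup f S))) T =
      (if S = T - {x} then (if x \<in> T then fsign (T-{x}) x (lookup f (T-{x})) else 0) else 0)"
      by (cases "x \<in> S") (auto simp: lookup_single when_def)
  qed
  also have "\<dots> = (if x \<in> T then fsign (T - {x}) x (lookup f (T - {x})) else 0)"
    by (auto simp: sum.delta in_keys_iff)
  finally show ?thesis .
qed

lemma lookup_rpsistar: "lookup (rpsistar x f) T = (if x \<notin> T then fsign T x (lookup f (insert x T)) else 0)"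
proof -
  have "lookup (rpsistar x f) T = (\<Sum>S\<in>keys f. lookup (if x \<in> S then single (S - {x}) (fsign (S - {x}) x (lookup f S)) else 0) T)"
    unfolding rpsistar_def by (simp add: lookup_sum)
  also have "\<dots> = (\<Sum>S\<in>keys f. if S = insert x T then (if x \<notin> T then fsign T x (lookup f (insert x T)) else 0) else 0)"
  proof (rule sum.cong[OF refl])
    fix S assume "S \<in> keys f"
    show "lookup (if x \<in> S then single (S - {x}) (fsign (S - {x}) x (lookup f S)) else 0) T =
      (if S = insert x T then (if x \<notin> T then fsign T x (lookup f (insert x T)) else 0) else 0)"
      by (cases "x \<in> S") (auto simp: lookup_single when_def)
  qed
  also have "\<dots> = (if x \<notin> T then fsign T x (lookup f (insert x T)) else 0)"
    by (auto simp: sum.delta in_keys_iff)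
  finally show ?thesis .
qed

text \<open>\<open>fsign S n\<close> counts the elements of \<open>S\<close> above \<open>n\<close>; as \<open>card\<close> of an infinite set
  is \<open>0\<close>, its sign rules only hold for states with finitely many positive elements.\<close>

definition finite_above :: "int set \<Rightarrow> bool" where "finite_above S \<longleftrightarrow> finite {j\<in>S. 0<j}"
definition all_keys :: "(int set \<Rightarrow> bool) \<Rightarrow> fock \<Rightarrow> bool" where
  "all_keys P f \<longleftrightarrow> (\<forall>S\<in>keys f. P S)"
abbreviation finite_states where "finite_states \<equiv> all_keys finite_above"

lemma finite_above_greater: "finite_above U \<Longrightarrow> finite {j\<in>U. x<j}"
proof -
  assume "finite_above U"
  have "{j\<in>U. x<j} \<subseteq> {j\<in>U. 0<j} \<union> {x<..0}" by auto
  then show ?thesis using \<open>finite_above U\<close> unfolding finite_above_def by (meson finite_Un finite_greaterThanAtMost_int finite_subset)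
qed

lemma finite_above_insert[simp]: "finite_above (insert y U) \<longleftrightarrow> finite_above U"
proof -
  have "{j\<in>insert y U. 0<j} = (if 0 < y then insert y {j\<in>U. 0<j} else {j\<in>U. 0<j})" by auto
  then show ?thesis unfolding finite_above_def by auto
qed

lemma finite_above_remove[simp]: "finite_above (U - {y}) \<longleftrightarrow> finite_above U"
  by (metis finite_above_insert insert_Diff_single)

lemma fsign_insert:
  assumes "y \<notin> U" "finite_above U"
  shows "fsign (insert y U) x c = (if x < y then - fsign U x c else fsign U x c)"
proof -
  have fin: "finite {j\<in>U. x<j}" using finite_above_greater[OF assms(2)] .
  have e: "{j\<in>insert y U. x<j} = (if x < y then insert y {j\<in>U. x<j} else {j\<in>U. x<j})" by auto
  show ?thesis
  proof (cases "x < y")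
    case True
    have c: "card {j\<in>insert y U. x<j} = Suc (card {j\<in>U. x<j})"
      unfolding e using True fin assms(1) by simp
    show ?thesis unfolding fsign_def c using True by simp
  next
    case False
    have c: "{j\<in>insert y U. x<j} = {j\<in>U. x<j}" using False by auto
    show ?thesis unfolding fsign_def c using False by simp
  qed
qed

lemma all_keysD: "all_keys P f \<Longrightarrow> lookup f S \<noteq> 0 \<Longrightarrow> P S"
  unfolding all_keys_def by (simp add: in_keys_iff)
lemma all_keys_add: "all_keys P f \<Longrightarrow> all_keys P g \<Longrightarrow> all_keys P (f + g)"
  unfolding all_keys_def using keys_add[of f g] by auto
lemma all_keys_diff: "all_keys P f \<Longrightarrow> all_keys P g \<Longrightarrow> all_keys P (f - g)"
  unfolding all_keys_def using keys_diff[of f g] by auto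
lemma all_keys_sum: "(\<And>i. i \<in> A \<Longrightarrow> all_keys P (g i)) \<Longrightarrow> all_keys P (sum g A)"
  unfolding all_keys_def using keys_sum[of g A] by auto
lemma all_keys_dmul: "all_keys P f \<Longrightarrow> all_keys P (dmul d f)"
  unfolding all_keys_def by (auto simp: in_keys_iff)
lemma all_keys_rpsi: "all_keys P f \<Longrightarrow> (\<And>S. P S \<Longrightarrow> x \<notin> S \<Longrightarrow> Q (insert x S)) \<Longrightarrow> all_keys Q (rpsi x f)"
proof -
  assume a: "all_keys P f" and b: "\<And>S. P S \<Longrightarrow> x \<notin> S \<Longrightarrow> Q (insert x S)"
  show ?thesis unfolding all_keys_def
  proof
    fix T assume "T \<in> keys (rpsi x f)"
    then have t: "x \<in> T" "lookup f (T - {x}) \<noteq> 0" by (auto simp: in_keys_iff lookup_rpsi split: if_splits)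
    then have "P (T - {x})" using a all_keysD by blast
    then have "Q (insert x (T - {x}))" using b by blast
    then show "Q T" using t by (simp add: insert_absorb)
  qed
qed
lemma all_keys_rpsistar: "all_keys P f \<Longrightarrow> (\<And>S. P S \<Longrightarrow> x \<in> S \<Longrightarrow> Q (S - {x})) \<Longrightarrow> all_keys Q (rpsistar x f)"
proof -
  assume a: "all_keys P f" and b: "\<And>S. P S \<Longrightarrow> x \<in> S \<Longrightarrow> Q (S - {x})"
  show ?thesis unfolding all_keys_def
  proof
    fix T assume "T \<in> keys (rpsistar x f)"
    then have t: "x \<notin> T" "lookup f (insert x T) \<noteq> 0" by (auto simp: in_keys_iff lookup_rpsistar split: if_splits)
    then have "P (insert x T)" using a all_keysD by blast
    then have "Q (insert x T - {x})" using b by blast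
    then show "Q T" using t by simp
  qed
qed
lemma all_keys_mono: "all_keys P f \<Longrightarrow> (\<And>S. P S \<Longrightarrow> Q S) \<Longrightarrow> all_keys Q f"
  unfolding all_keys_def by blast
lemma all_keys_conj: "all_keys (\<lambda>S. P S \<and> Q S) f \<longleftrightarrow> all_keys P f \<and> all_keys Q f"
  unfolding all_keys_def by blast

lemma finite_states_rpsi: "finite_states f \<Longrightarrow> finite_states (rpsi x f)" by (erule all_keys_rpsi) auto
lemma finite_states_rpsistar: "finite_states f \<Longrightarrow> finite_states (rpsistar x f)" by (erule all_keys_rpsistar) auto
lemma finite_states_dmul: "finite_states f \<Longrightarrow> finite_states (dmul d f)" by (rule all_keys_dmul)
lemma finite_states_sum: "(\<And>i. i \<in> A \<Longrightarrow> finite_states (g i)) \<Longrightarrow> finite_states (sum g A)" by (rule all_keys_sum)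
lemma finite_states_diff: "finite_states f \<Longrightarrow> finite_states g \<Longrightarrow> finite_states (f - g)" by (rule all_keys_diff)

lemma rpsi_add: "rpsi x (f + g) = rpsi x f + rpsi x g"
  by (rule fock_eqI) (simp add: lookup_rpsi lookup_add fsign_add)
lemma rpsi_uminus: "rpsi x (- f) = - rpsi x f"
  by (rule fock_eqI) (simp add: lookup_rpsi fsign_neg)
lemma rpsi_diff: "rpsi x (f - g) = rpsi x f - rpsi x g"
  by (rule fock_eqI) (simp add: lookup_rpsi lookup_minus fsign_diff)
lemma rpsi_0[simp]: "rpsi x 0 = 0"
  by (rule fock_eqI) (simp add: lookup_rpsi)
lemma rpsi_sum: "rpsi x (sum g A) = sum (\<lambda>i. rpsi x (g i)) A"
  by (induction A rule: infinite_finite_induct) (auto simp: rpsi_add)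
lemma rpsi_dmul: "rpsi x (dmul d f) = dmul d (rpsi x f)"
  by (rule fock_eqI) (simp add: lookup_rpsi fsign_mult)
lemma rpsistar_add: "rpsistar x (f + g) = rpsistar x f + rpsistar x g"
  by (rule fock_eqI) (simp add: lookup_rpsistar lookup_add fsign_add)
lemma rpsistar_uminus: "rpsistar x (- f) = - rpsistar x f"
  by (rule fock_eqI) (simp add: lookup_rpsistar fsign_neg)
lemma rpsistar_diff: "rpsistar x (f - g) = rpsistar x f - rpsistar x g"
  by (rule fock_eqI) (simp add: lookup_rpsistar lookup_minus fsign_diff)
lemma rpsistar_0[simp]: "rpsistar x 0 = 0"
  by (rule fock_eqI) (simp add: lookup_rpsistar)
lemma rpsistar_sum: "rpsistar x (sum g A) = sum (\<lambda>i. rpsistar x (g i)) A"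
  by (induction A rule: infinite_finite_induct) (auto simp: rpsistar_add)
lemma rpsistar_dmul: "rpsistar x (dmul d f) = dmul d (rpsistar x f)"
  by (rule fock_eqI) (simp add: lookup_rpsistar fsign_mult)
lemma dmul_add: "dmul d (f + g) = dmul d f + dmul d g"
  by (rule fock_eqI) (simp add: lookup_add distrib_left)
lemma dmul_uminus: "dmul d (- f) = - dmul d f"
  by (rule fock_eqI) simp
lemma dmul_diff: "dmul d (f - g) = dmul d f - dmul d g"
  by (rule fock_eqI) (simp add: lookup_minus right_diff_distrib)
lemma dmul_0[simp]: "dmul d 0 = 0"
  by (rule fock_eqI) simp
lemma dmul_sum: "dmul d (sum g A) = sum (\<lambda>i. dmul d (g i)) A"
  by (induction A rule: infinite_finite_induct) (auto simp: dmul_add)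
lemma dmul_dmul: "dmul d (dmul e f) = dmul (d * e) f"
  by (rule fock_eqI) (simp add: mult.assoc)
lemma dmul_1[simp]: "dmul 1 f = f"
  by (rule fock_eqI) simp
lemma dmul_add_left: "dmul (d + e) f = dmul d f + dmul e f"
  by (rule fock_eqI) (simp add: lookup_add distrib_right)

lemmas fock_linear_simps = rpsi_add rpsi_diff rpsi_uminus rpsi_sum rpsi_dmul
  rpsistar_add rpsistar_diff rpsistar_uminus rpsistar_sum rpsistar_dmul
  dmul_add dmul_diff dmul_uminus dmul_sum dmul_dmul

lemma fsign_comm: "fsign S x (fsign S' y c) = fsign S' y (fsign S x c)"
  by (simp add: fsign_def)

lemma rpsi_rpsi_same: "rpsi x (rpsi x f) = 0"
  by (rule fock_eqI) (simp add: lookup_rpsi)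

lemma rpsi_anticomm_distinct:
  assumes "x \<noteq> y" "finite_states f"
  shows "rpsi x (rpsi y f) = - rpsi y (rpsi x f)"
proof (rule fock_eqI)
  fix T
  show "lookup (rpsi x (rpsi y f)) T = lookup (- rpsi y (rpsi x f)) T"
  proof (cases "x \<in> T \<and> y \<in> T")
    case True
    define U where "U = T - {x} - {y}"
    have e1: "T - {x} = insert y U" "T - {y} = insert x U" "T - {y} - {x} = U" "T - {x} - {y} = U"
      using True assms(1) unfolding U_def by auto
    have xu: "x \<notin> U" "y \<notin> U" unfolding U_def by auto
    have yx: "y \<in> T - {x}" "x \<in> T - {y}" using True assms(1) by auto
    have e2: "insert y U - {y} = U" "insert x U - {x} = U" "y \<in> insert y U" "x \<in> insert x U"
      using xu by auto
    show ?thesis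
    proof (cases "lookup f U = 0")
      case True then show ?thesis using \<open>x \<in> T \<and> y \<in> T\<close> yx by (simp only: lookup_rpsi e1 e2 if_True fsign_0 lookup_uminus) simp
    next
      case False
      then have fp: "finite_above U" using assms(2) all_keysD by blast
      have "lookup (rpsi x (rpsi y f)) T = fsign (insert y U) x (fsign U y (lookup f U))"
        using \<open>x \<in> T \<and> y \<in> T\<close> yx by (simp only: lookup_rpsi e1 e2 if_True)
      also have "\<dots> = (if x < y then - fsign U x (fsign U y (lookup f U)) else fsign U x (fsign U y (lookup f U)))"
        by (rule fsign_insert[OF xu(2) fp])
      also have "\<dots> = - (if y < x then - fsign U y (fsign U x (lookup f U)) else fsign U y (fsign U x (lookup f U)))"
        using assms(1) by (auto simp: fsign_comm)
      also have "\<dots> = - fsign (insert x U) y (fsign U x (lookup f U))"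
        by (simp only: fsign_insert[OF xu(1) fp])
      also have "\<dots> = lookup (- rpsi y (rpsi x f)) T"
        using \<open>x \<in> T \<and> y \<in> T\<close> yx by (simp only: lookup_rpsi e1 e2 if_True lookup_uminus)
      finally show ?thesis .
    qed
  next
    case False
    then show ?thesis by (auto simp: lookup_rpsi)
  qed
qed

lemma rpsi_anticomm: "finite_states f \<Longrightarrow> rpsi x (rpsi y f) = - rpsi y (rpsi x f)"
proof (cases "x = y")
  case True then show ?thesis by (simp add: rpsi_rpsi_same)
next
  case False
  assume "finite_states f" then show ?thesis using rpsi_anticomm_distinct[OF False] by blast
qed

lemma rpsi_rpsistar_anticomm:
  assumes "x \<noteq> y" "finite_states f"
  shows "rpsi x (rpsistar y f) = - rpsistar y (rpsi x f)"
proof (rule fock_eqI)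
  fix T
  show "lookup (rpsi x (rpsistar y f)) T = lookup (- rpsistar y (rpsi x f)) T"
  proof (cases "x \<in> T \<and> y \<notin> T")
    case True
    define V where "V = T - {x}"
    have e1: "insert y T - {x} = insert y V" "T = insert x V" "T - {x} = V"
      using True assms(1) unfolding V_def by auto
    have notin_V: "x \<notin> V" "y \<notin> V" using True unfolding V_def by auto
    have ins: "x \<in> insert y T" "y \<notin> V" "x \<in> T" "y \<notin> T" using True notin_V by auto
    define c where "c = lookup f (insert y V)"
    show ?thesis
    proof (cases "c = 0")
      case True then show ?thesis using ins
        by (simp only: lookup_rpsistar lookup_rpsi e1(1) e1(3) c_def[symmetric] if_True if_False not_True_eq_False not_False_eq_True fsign_0 lookup_uminus) simp
    next
      case False
      then have fp: "finite_above V" using assms(2) all_keysD c_def by fastforce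
      have "lookup (rpsi x (rpsistar y f)) T = fsign V x (fsign V y c)"
        using ins by (simp only: lookup_rpsistar lookup_rpsi e1(3) c_def[symmetric] if_True not_False_eq_True)
      also have "\<dots> = - fsign (insert x V) y (fsign (insert y V) x c)"
        using assms(1) by (auto simp: fsign_insert[OF notin_V(1) fp] fsign_insert[OF notin_V(2) fp] fsign_comm fsign_neg)
      also have "\<dots> = - fsign T y (fsign (insert y T - {x}) x (lookup f (insert y T - {x})))"
        by (simp only: e1(1) c_def) (simp only: e1(2)[symmetric])
      also have "\<dots> = lookup (- rpsistar y (rpsi x f)) T"
        using ins by (simp only: lookup_rpsistar lookup_rpsi lookup_uminus if_True not_False_eq_True)
      finally show ?thesis .
    qed
  next
    case False
    then show ?thesis using assms(1) by (auto simp: lookup_rpsi lookup_rpsistar)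
  qed
qed

lemma rpsi_rpsistar_same: "rpsi x (rpsistar x f) + rpsistar x (rpsi x f) = f"
proof (rule fock_eqI)
  fix T
  show "lookup (rpsi x (rpsistar x f) + rpsistar x (rpsi x f)) T = lookup f T"
    by (cases "x \<in> T") (auto simp: lookup_add lookup_rpsi lookup_rpsistar insert_absorb)
qed

lemma rpsi_rpsistar_anticomm_delta:
  "finite_states f \<Longrightarrow> rpsi x (rpsistar y f) + rpsistar y (rpsi x f) = (if x = y then f else 0)"
  using rpsi_rpsistar_same rpsi_rpsistar_anticomm by (cases "x = y") auto

section \<open>Charge\<close>

definition rel_charge :: "int \<Rightarrow> int set \<Rightarrow> int" where
  "rel_charge m S = int (card (S - vac m)) - int (card (vac m - S))"

lemma vac_step: "odd m \<Longrightarrow> vac (m + 2) = insert (m + 2) (vac m)"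
  unfolding vac_def by (auto, presburger)

lemma finite_vac_diff: "finite (vac m - vac m')"
proof -
  have "vac m - vac m' \<subseteq> {m'<..m}" unfolding vac_def by auto
  then show ?thesis using finite_subset by blast
qed

lemma finite_diff_vac_shift: "finite (S - vac m) \<Longrightarrow> finite (S - vac m')"
proof -
  assume "finite (S - vac m)"
  moreover have "S - vac m' \<subseteq> (S - vac m) \<union> (vac m - vac m')" by auto
  ultimately show ?thesis using finite_vac_diff finite_subset by (metis finite_Un)
qed

lemma finite_vac_diff_shift: "finite (vac m - S) \<Longrightarrow> finite (vac m' - S)"
proof -
  assume "finite (vac m - S)"
  moreover have "vac m' - S \<subseteq> (vac m - S) \<union> (vac m' - vac m)" by auto
  ultimately show ?thesis using finite_vac_diff finite_subset by (metis finite_Un)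
qed

lemma rel_charge_vac_step:
  assumes "odd m" "finite (S - vac m)" "finite (vac m - S)"
  shows "rel_charge (m + 2) S = rel_charge m S - 1"
proof (cases "m + 2 \<in> S")
  case True
  have nv: "m + 2 \<notin> vac m" unfolding vac_def by auto
  have a: "S - vac (m+2) = (S - vac m) - {m+2}" using vac_step[OF assms(1)] by auto
  have b: "vac (m+2) - S = vac m - S" using vac_step[OF assms(1)] True by auto
  have "m + 2 \<in> S - vac m" using True nv by auto
  then have "card (S - vac (m+2)) = card (S - vac m) - 1" "card (S - vac m) \<ge> 1"
    unfolding a using assms(2) by (auto simp: card_gt_0_iff Suc_le_eq)
  then show ?thesis unfolding rel_charge_def b by linarith
next
  case False
  have nv: "m + 2 \<notin> vac m" unfolding vac_def by auto
  have a: "S - vac (m+2) = S - vac m" using vac_step[OF assms(1)] False by auto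
  have b: "vac (m+2) - S = insert (m+2) (vac m - S)" using vac_step[OF assms(1)] False by auto
  have "card (vac (m+2) - S) = card (vac m - S) + 1" unfolding b using assms(3) nv by simp
  then show ?thesis unfolding rel_charge_def a by linarith
qed

lemma rel_charge_insert:
  assumes "x \<notin> S" "finite (S - vac m)" "finite (vac m - S)"
  shows "rel_charge m (insert x S) = rel_charge m S + 1"
proof (cases "x \<in> vac m")
  case False
  have a: "insert x S - vac m = insert x (S - vac m)" using False by auto
  have b: "vac m - insert x S = vac m - S" using False by auto
  show ?thesis unfolding rel_charge_def a b using assms by simp
next
  case True
  have a: "insert x S - vac m = S - vac m" using True by auto
  have b: "vac m - insert x S = (vac m - S) - {x}" by auto
  have "x \<in> vac m - S" using True assms(1) by auto
  then have "card (vac m - insert x S) = card (vac m - S) - 1" "card (vac m - S) \<ge> 1"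
    unfolding b using assms(3) by (auto simp: card_gt_0_iff Suc_le_eq)
  then show ?thesis unfolding rel_charge_def a by linarith
qed

lemma charge_state_iff_rel_charge: "charge_state m S \<longleftrightarrow> (\<forall>x\<in>S. odd x) \<and> finite (S - vac m) \<and> finite (vac m - S) \<and> rel_charge m S = 0"
  unfolding charge_state_def rel_charge_def by auto

lemma charge_state_insert:
  assumes "odd m" "odd x" "x \<notin> S" "charge_state m S"
  shows "charge_state (m + 2) (insert x S)"
proof -
  have f: "finite (S - vac m)" "finite (vac m - S)" "\<forall>y\<in>S. odd y" "rel_charge m S = 0"
    using assms(4) charge_state_iff_rel_charge by auto
  have f2: "finite (insert x S - vac m)" "finite (vac m - insert x S)"
    using f(1,2) by (auto intro: finite_subset[of _ "insert x (S - vac m)"] finite_subset[of _ "vac m - S"])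
  have "rel_charge (m+2) (insert x S) = rel_charge m (insert x S) - 1" using rel_charge_vac_step[OF assms(1) f2] .
  also have "\<dots> = 0" using rel_charge_insert[OF assms(3) f(1,2)] f(4) by simp
  finally show ?thesis unfolding charge_state_iff_rel_charge using f2 f(3) assms(2)
    by (auto intro: finite_diff_vac_shift finite_vac_diff_shift)
qed

lemma charge_state_remove:
  assumes "odd m" "x \<in> S" "charge_state m S"
  shows "charge_state (m - 2) (S - {x})"
proof -
  have f: "finite (S - vac m)" "finite (vac m - S)" "\<forall>y\<in>S. odd y" "rel_charge m S = 0"
    using assms(3) charge_state_iff_rel_charge by auto
  define S' where "S' = S - {x}"
  have S: "S = insert x S'" "x \<notin> S'" using assms(2) unfolding S'_def by auto
  have f2: "finite (S' - vac m)" "finite (vac m - S')"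
    using f(1,2) unfolding S'_def by (auto intro: finite_subset[of _ "S - vac m"] finite_subset[of _ "insert x (vac m - S)"])
  have f3: "finite (S' - vac (m-2))" "finite (vac (m-2) - S')" using f2 by (auto intro: finite_diff_vac_shift finite_vac_diff_shift)
  have o: "odd (m - 2)" using assms(1) by simp
  have "rel_charge m S' = rel_charge (m - 2) S' - 1" using rel_charge_vac_step[OF o f3] by simp
  moreover have "rel_charge m S = rel_charge m S' + 1" unfolding S(1) using rel_charge_insert[OF S(2) f2] .
  ultimately have "rel_charge (m-2) S' = 0" using f(4) by simp
  then show ?thesis unfolding charge_state_iff_rel_charge S'_def[symmetric] using f3 f(3) S'_def by auto
qed

lemma DH_iff_all_keys: "f \<in> DH m \<longleftrightarrow> all_keys (charge_state m) f"
  unfolding DH_def all_keys_def by simp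

lemma DH_rpsi: "odd m \<Longrightarrow> odd x \<Longrightarrow> f \<in> DH m \<Longrightarrow> rpsi x f \<in> DH (m + 2)"
  unfolding DH_iff_all_keys by (erule all_keys_rpsi) (auto intro: charge_state_insert)
lemma DH_rpsistar: "odd m \<Longrightarrow> f \<in> DH m \<Longrightarrow> rpsistar x f \<in> DH (m - 2)"
  unfolding DH_iff_all_keys by (erule all_keys_rpsistar) (auto intro: charge_state_remove)
lemma DH_add: "f \<in> DH m \<Longrightarrow> g \<in> DH m \<Longrightarrow> f + g \<in> DH m"
  unfolding DH_iff_all_keys by (rule all_keys_add)
lemma DH_diff: "f \<in> DH m \<Longrightarrow> g \<in> DH m \<Longrightarrow> f - g \<in> DH m"
  unfolding DH_iff_all_keys by (rule all_keys_diff)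
lemma DH_sum: "(\<And>i. i \<in> A \<Longrightarrow> g i \<in> DH m) \<Longrightarrow> sum g A \<in> DH m"
  unfolding DH_iff_all_keys by (rule all_keys_sum)
lemma DH_dmul: "f \<in> DH m \<Longrightarrow> dmul d f \<in> DH m"
  unfolding DH_iff_all_keys by (rule all_keys_dmul)

lemma DH_finite_states: "f \<in> DH m \<Longrightarrow> finite_states f"
proof -
  assume "f \<in> DH m"
  then show ?thesis unfolding DH_iff_all_keys
  proof (rule all_keys_mono)
    fix S assume "charge_state m S"
    then have "finite (S - vac m)" unfolding charge_state_def by auto
    then have "finite (S - vac 0)" by (rule finite_diff_vac_shift)
    moreover have "{j\<in>S. 0<j} \<subseteq> S - vac 0" unfolding vac_def by auto
    ultimately show "finite_above S" unfolding finite_above_def using finite_subset by blast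
  qed
qed

lemma rel_charge_odd_vac:
  assumes "finite (S - vac (-1))" "finite (vac (-1) - S)"
  shows "rel_charge (2 * k - 1) S = rel_charge (-1) S - k"
proof (induction k rule: int_induct[where k=0])
  case base then show ?case by simp
next
  case (step1 i)
  have o: "odd (2 * i - 1)" by presburger
  have "rel_charge (2 * i - 1 + 2) S = rel_charge (2*i - 1) S - 1"
    by (rule rel_charge_vac_step[OF o]) (use assms in \<open>auto intro: finite_diff_vac_shift finite_vac_diff_shift\<close>)
  moreover have "2 * i - 1 + 2 = 2 * (i + 1) - 1" by simp
  ultimately show ?case using step1 by simp
next
  case (step2 i)
  have o: "odd (2 * (i - 1) - 1)" by presburger
  have "rel_charge (2 * (i - 1) - 1 + 2) S = rel_charge (2*(i - 1) - 1) S - 1"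
    by (rule rel_charge_vac_step[OF o]) (use assms in \<open>auto intro: finite_diff_vac_shift finite_vac_diff_shift\<close>)
  moreover have "2 * (i - 1) - 1 + 2 = 2 * i - 1" by simp
  ultimately show ?case using step2 by simp
qed

lemma rel_charge_minus1: "odd m \<Longrightarrow> charge_state m S \<Longrightarrow> rel_charge (-1) S = (m + 1) div 2"
proof -
  assume o: "odd m" and c: "charge_state m S"
  have f: "finite (S - vac (-1))" "finite (vac (-1) - S)" "rel_charge m S = 0"
    using c unfolding charge_state_iff_rel_charge by (auto intro: finite_diff_vac_shift finite_vac_diff_shift)
  define k where "k = (m + 1) div 2"
  have k: "m = 2 * k - 1" using o unfolding k_def by presburger
  have "rel_charge m S = rel_charge (-1) S - k" unfolding k by (rule rel_charge_odd_vac[OF f(1,2)])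
  then show ?thesis using f(3) k by simp
qed

section \<open>\<open>Q\<close> and \<open>C\<close> as finite sums\<close>

text \<open>A state in the window of size \<open>N\<close> differs from \<open>vac (-1)\<close> only in the modes
  \<open>\<plusminus>1, \<dots>, \<plusminus>(2N - 1)\<close>; on such vectors all but finitely many terms of \<open>Q\<close> and \<open>C\<close>
  vanish.\<close>

definition window_state :: "nat \<Rightarrow> int set \<Rightarrow> bool" where
  "window_state N S \<longleftrightarrow> (\<forall>x. odd x \<and> x \<le> -(2*int N+1) \<longrightarrow> x \<in> S) \<and> (\<forall>x\<in>S. x \<le> 2*int N - 1)"
abbreviation windowed where "windowed N \<equiv> all_keys (window_state N)"

lemma window_state_mono: "window_state N S \<Longrightarrow> N \<le> M \<Longrightarrow> window_state M S"
  unfolding window_state_def by force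
lemma windowed_mono: "windowed N f \<Longrightarrow> N \<le> M \<Longrightarrow> windowed M f"
  by (erule all_keys_mono) (rule window_state_mono)

lemma windowed_rpsi: "windowed N f \<Longrightarrow> x \<le> 2*int N - 1 \<Longrightarrow> windowed N (rpsi x f)"
  by (erule all_keys_rpsi) (auto simp: window_state_def)
lemma windowed_rpsistar: "windowed N f \<Longrightarrow> \<not> (odd x \<and> x \<le> -(2*int N+1)) \<Longrightarrow> windowed N (rpsistar x f)"
  by (erule all_keys_rpsistar) (auto simp: window_state_def)

lemma rpsi_occupied: "all_keys (\<lambda>S. x \<in> S) g \<Longrightarrow> rpsi x g = 0"
  by (rule fock_eqI) (auto simp: lookup_rpsi dest: all_keysD)

lemma all_keys_mem_rpsi: "all_keys (\<lambda>S. a \<in> S) f \<Longrightarrow> all_keys (\<lambda>S. a \<in> S) (rpsi x f)"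
  by (erule all_keys_rpsi) auto

lemma windowed_occupied:
  assumes "windowed N f" "N < n"
  shows "all_keys (\<lambda>S. - (2 * int n - 1) \<in> S) f"
  using assms(1) by (rule all_keys_mono) (use assms(2) in \<open>auto simp: window_state_def\<close>)

lemma fsum_eq: "finite A \<Longrightarrow> (\<And>n. n \<notin> A \<Longrightarrow> g n = 0) \<Longrightarrow> fsum g = sum g A"
  unfolding fsum_def by (rule sum.mono_neutral_left) auto

definition Qsum :: "nat \<Rightarrow> fock \<Rightarrow> fock" where
  "Qsum N f = (\<Sum>n\<in>{1..N}. dmul (dvar n) (rpsi (- (2 * int n - 1)) f))"

lemma Qop_eq_Qsum: "windowed N f \<Longrightarrow> Qop f = Qsum N f"
proof -
  assume b: "windowed N f"
  have "Qop f = (\<Sum>n\<in>{1..N}. if 1 \<le> n then dmul (dvar n) (rpsi (- (2 * int n - 1)) f) else 0)"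
    unfolding Qop_def
  proof (rule fsum_eq, simp)
    fix n assume "n \<notin> {1..N}"
    then have "n = 0 \<or> N < n" by auto
    then show "(if 1 \<le> n then dmul (dvar n) (rpsi (- (2 * int n - 1)) f) else 0) = 0"
      using rpsi_occupied[OF windowed_occupied[OF b]] by auto
  qed
  also have "\<dots> = Qsum N f" unfolding Qsum_def by (rule sum.cong) auto
  finally show ?thesis .
qed

definition psitilde_sum :: "nat \<Rightarrow> nat \<Rightarrow> fock \<Rightarrow> fock" where
  "psitilde_sum N n f = dmul (single 0 (2 * (2 * of_nat n - 1))) (rpsi (2 * int n - 1) f)
     - (\<Sum>l\<in>{1..n+N}. dmul (Pcoef n l) (rpsi (2 * int n - 1 - 2 * int l) f))"

lemma rpsitilde_eq_psitilde_sum: "windowed N f \<Longrightarrow> rpsitilde_pos n f = psitilde_sum N n f"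
proof -
  assume b: "windowed N f"
  have "fsum (\<lambda>l. if 1 \<le> l then dmul (Pcoef n l) (rpsi (2 * int n - 1 - 2 * int l) f) else 0)
     = (\<Sum>l\<in>{1..n+N}. if 1 \<le> l then dmul (Pcoef n l) (rpsi (2 * int n - 1 - 2 * int l) f) else 0)"
  proof (rule fsum_eq, simp)
    fix l assume "l \<notin> {1..n+N}"
    then have "l = 0 \<or> n + N < l" by auto
    moreover have "n + N < l \<Longrightarrow> rpsi (2 * int n - 1 - 2 * int l) f = 0"
    proof -
      assume l: "n + N < l"
      have "all_keys (\<lambda>S. 2 * int n - 1 - 2 * int l \<in> S) f"
        using b by (rule all_keys_mono) (use l in \<open>auto simp: window_state_def\<close>)
      then show ?thesis by (rule rpsi_occupied)
    qed
    ultimately show "(if 1 \<le> l then dmul (Pcoef n l) (rpsi (2 * int n - 1 - 2 * int l) f) else 0) = 0"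
      by auto
  qed
  also have "\<dots> = (\<Sum>l\<in>{1..n+N}. dmul (Pcoef n l) (rpsi (2 * int n - 1 - 2 * int l) f))"
    by (rule sum.cong) auto
  finally show ?thesis unfolding rpsitilde_pos_def psitilde_sum_def by simp
qed

lemma all_keys_mem_rpsitilde: "all_keys (\<lambda>S. a \<in> S) f \<Longrightarrow> all_keys (\<lambda>S. a \<in> S) (rpsitilde_pos n f)"
  unfolding rpsitilde_pos_def fsum_def
  by (intro all_keys_diff all_keys_dmul all_keys_mem_rpsi all_keys_sum) (auto intro: all_keys_dmul all_keys_mem_rpsi)

definition Csum :: "nat \<Rightarrow> fock \<Rightarrow> fock" where
  "Csum N f = (\<Sum>n\<in>{1..N}. rpsi (- (2 * int n - 1)) (psitilde_sum N n f))"

lemma Cop_eq_Csum: "windowed N f \<Longrightarrow> Cop f = Csum N f"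
proof -
  assume b: "windowed N f"
  have "Cop f = (\<Sum>n\<in>{1..N}. if 1 \<le> n then rpsi (- (2 * int n - 1)) (rpsitilde_pos n f) else 0)"
    unfolding Cop_def
  proof (rule fsum_eq, simp)
    fix n assume "n \<notin> {1..N}"
    then have "n = 0 \<or> N < n" by auto
    then show "(if 1 \<le> n then rpsi (- (2 * int n - 1)) (rpsitilde_pos n f) else 0) = 0"
      using rpsi_occupied[OF all_keys_mem_rpsitilde[OF windowed_occupied[OF b]]] by auto
  qed
  also have "\<dots> = Csum N f" unfolding Csum_def using rpsitilde_eq_psitilde_sum[OF b] by (intro sum.cong) auto
  finally show ?thesis .
qed

lemma DH_windowed: "f \<in> DH m \<Longrightarrow> \<exists>N. windowed N f"
proof -
  assume f: "f \<in> DH m"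
  define B where "B = (\<Union>S\<in>keys f. (S - vac m) \<union> (vac m - S))"
  have cs: "\<And>S. S \<in> keys f \<Longrightarrow> charge_state m S" using f unfolding DH_def by auto
  have finB: "finite B" unfolding B_def using cs unfolding charge_state_def by auto
  define M where "M = Max (insert \<bar>m\<bar> (abs ` B))"
  have M: "\<bar>m\<bar> \<le> M" "\<And>y. y \<in> B \<Longrightarrow> \<bar>y\<bar> \<le> M" using finB unfolding M_def by auto
  define N where "N = nat M + 1"
  have NM: "int N = M + 1" unfolding N_def using M(1) by simp
  have "window_state N S" if S: "S \<in> keys f" for S
    unfolding window_state_def
  proof (intro conjI allI impI ballI)
    fix x assume x: "odd x \<and> x \<le> - (2 * int N + 1)"
    then have "x \<in> vac m" using M(1) NM unfolding vac_def by auto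
    show "x \<in> S"
    proof (rule ccontr)
      assume "x \<notin> S"
      then have "x \<in> B" using S \<open>x \<in> vac m\<close> unfolding B_def by auto
      then show False using M(2) x NM by fastforce
    qed
  next
    fix x assume "x \<in> S"
    show "x \<le> 2 * int N - 1"
    proof (cases "x \<in> vac m")
      case True then show ?thesis using M(1) NM unfolding vac_def by auto
    next
      case False
      then have "x \<in> B" using S \<open>x \<in> S\<close> unfolding B_def by auto
      then show ?thesis using M(2) NM by fastforce
    qed
  qed
  then show ?thesis unfolding all_keys_def by blast
qed

lemma Qsum_add: "Qsum N (f + g) = Qsum N f + Qsum N g"
  unfolding Qsum_def by (simp add: fock_linear_simps sum.distrib)
lemma Qsum_diff: "Qsum N (f - g) = Qsum N f - Qsum N g"
  unfolding Qsum_def by (simp add: fock_linear_simps sum_subtractf)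

lemma windowed_Qsum: "windowed N f \<Longrightarrow> windowed N (Qsum N f)"
  unfolding Qsum_def by (intro all_keys_sum all_keys_dmul windowed_rpsi) auto
lemma DH_Qsum: "odd m \<Longrightarrow> f \<in> DH m \<Longrightarrow> Qsum N f \<in> DH (m + 2)"
  unfolding Qsum_def by (intro DH_sum DH_dmul DH_rpsi) auto

lemma fock_eq_uminus_self: "(S::fock) = - S \<Longrightarrow> S = 0"
proof -
  assume a: "S = - S"
  show ?thesis
  proof (rule fock_eqI, rule poly_mapping_eqI)
    fix T \<mu>
    have "lookup (lookup S T) \<mu> = - lookup (lookup S T) \<mu>"
      by (subst a) simp
    then show "lookup (lookup S T) \<mu> = lookup (lookup 0 T) \<mu>" by simp
  qed
qed

lemma double_sum_antisym:
  assumes "\<And>n m. n \<in> A \<Longrightarrow> m \<in> A \<Longrightarrow> h n m = - h m n"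
  shows "(\<Sum>n\<in>A. \<Sum>m\<in>A. h n m) = (0::fock)"
proof -
  have "(\<Sum>n\<in>A. \<Sum>m\<in>A. h n m) = (\<Sum>m\<in>A. \<Sum>n\<in>A. h n m)" by (rule sum.swap)
  also have "\<dots> = (\<Sum>m\<in>A. \<Sum>n\<in>A. - h m n)"
    by (rule sum.cong[OF refl], rule sum.cong[OF refl], rule assms)
  also have "\<dots> = - (\<Sum>m\<in>A. \<Sum>n\<in>A. h m n)" by (simp add: sum_negf)
  finally show ?thesis by (rule fock_eq_uminus_self)
qed

lemma Qsum_Qsum: "finite_states f \<Longrightarrow> Qsum N (Qsum N f) = 0"
proof -
  assume F: "finite_states f"
  have "Qsum N (Qsum N f) = (\<Sum>n\<in>{1..N}. \<Sum>m\<in>{1..N}. dmul (dvar n * dvar m) (rpsi (- (2 * int n - 1)) (rpsi (- (2 * int m - 1)) f)))"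
    unfolding Qsum_def by (simp add: fock_linear_simps)
  also have "\<dots> = 0"
    by (rule double_sum_antisym) (subst rpsi_anticomm[OF F], simp add: dmul_uminus mult.commute)
  finally show ?thesis .
qed

lemma psitilde_sum_add: "psitilde_sum N n (f + g) = psitilde_sum N n f + psitilde_sum N n g"
  unfolding psitilde_sum_def by (simp add: fock_linear_simps sum.distrib)
lemma psitilde_sum_dmul: "psitilde_sum N n (dmul d f) = dmul d (psitilde_sum N n f)"
  unfolding psitilde_sum_def by (simp add: fock_linear_simps mult.commute)
lemma psitilde_sum_0[simp]: "psitilde_sum N n 0 = 0"
  unfolding psitilde_sum_def by simp
lemma finite_states_psitilde_sum: "finite_states f \<Longrightarrow> finite_states (psitilde_sum N n f)"
  unfolding psitilde_sum_def by (intro finite_states_sum finite_states_diff finite_states_dmul finite_states_rpsi)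
lemma psitilde_sum_rpsi: "finite_states f \<Longrightarrow> psitilde_sum N n (rpsi x f) = - rpsi x (psitilde_sum N n f)"
  unfolding psitilde_sum_def by (simp add: fock_linear_simps rpsi_anticomm[of f x] sum_negf)

lemma Csum_add: "Csum N (f + g) = Csum N f + Csum N g"
  unfolding Csum_def by (simp add: psitilde_sum_add fock_linear_simps sum.distrib)
lemma Csum_dmul: "Csum N (dmul d f) = dmul d (Csum N f)"
  unfolding Csum_def by (simp add: psitilde_sum_dmul fock_linear_simps)
lemma Csum_0[simp]: "Csum N 0 = 0"
  unfolding Csum_def by simp
lemma Csum_sum: "Csum N (sum g A) = (\<Sum>i\<in>A. Csum N (g i))"
  by (induction A rule: infinite_finite_induct) (auto simp: Csum_add)
lemma Csum_rpsi: "finite_states f \<Longrightarrow> Csum N (rpsi x f) = rpsi x (Csum N f)"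
proof -
  assume F: "finite_states f"
  have "rpsi y (psitilde_sum N n (rpsi x f)) = rpsi x (rpsi y (psitilde_sum N n f))" for y n
  proof -
    have "rpsi y (psitilde_sum N n (rpsi x f)) = - rpsi y (rpsi x (psitilde_sum N n f))"
      by (simp add: psitilde_sum_rpsi[OF F] rpsi_uminus)
    also have "\<dots> = rpsi x (rpsi y (psitilde_sum N n f))"
      by (subst rpsi_anticomm[OF finite_states_psitilde_sum[OF F]]) simp
    finally show ?thesis .
  qed
  then show ?thesis unfolding Csum_def by (simp add: rpsi_sum)
qed

lemma windowed_psitilde_sum: "windowed N f \<Longrightarrow> n \<le> N \<Longrightarrow> windowed N (psitilde_sum N n f)"
  unfolding psitilde_sum_def by (intro all_keys_diff all_keys_sum all_keys_dmul windowed_rpsi) auto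
lemma windowed_Csum: "windowed N f \<Longrightarrow> windowed N (Csum N f)"
  unfolding Csum_def by (intro all_keys_sum windowed_rpsi windowed_psitilde_sum) auto
lemma DH_psitilde_sum: "odd m \<Longrightarrow> f \<in> DH m \<Longrightarrow> psitilde_sum N n f \<in> DH (m + 2)"
  unfolding psitilde_sum_def by (intro DH_diff DH_sum DH_dmul DH_rpsi) auto
lemma DH_Csum: "odd m \<Longrightarrow> f \<in> DH m \<Longrightarrow> Csum N f \<in> DH (m + 4)"
proof -
  assume o: "odd m" and f: "f \<in> DH m"
  have "Csum N f \<in> DH (m + 2 + 2)"
    unfolding Csum_def by (intro DH_sum DH_rpsi DH_psitilde_sum) (use o f in auto)
  then show ?thesis by (simp add: add.assoc)
qed

lemma Qsum_Csum_comm: "finite_states f \<Longrightarrow> Qsum N (Csum N f) = Csum N (Qsum N f)"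
  unfolding Qsum_def by (simp add: Csum_sum Csum_dmul Csum_rpsi)

section \<open>Acyclicity of \<open>Q\<close> in negative charge\<close>

text \<open>\<open>xvar k\<close> is the variable \<open>\<partial>\<^bsub>2k+1\<^esub> = dvar (k + 1)\<close>, and \<open>pderiv_var k\<close> below is
  differentiation with respect to it.\<close>

definition mono_var :: "nat \<Rightarrow> nat \<Rightarrow>\<^sub>0 nat" where "mono_var k = single k 1"
definition xvar :: "nat \<Rightarrow> Dring" where "xvar k = single (mono_var k) 1"
definition mdegree :: "(nat \<Rightarrow>\<^sub>0 nat) \<Rightarrow> nat" where "mdegree \<mu> = (\<Sum>k\<in>keys \<mu>. lookup \<mu> k)"

lemma dvar_eq_xvar: "dvar n = xvar (n - 1)" by (simp add: dvar_def xvar_def mono_var_def)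
lemma lookup_mono_var: "lookup (mono_var k) j = (if k = j then 1 else 0)" by (simp add: mono_var_def lookup_single when_def)

lemma monomial_eqI: "(\<And>j. lookup a j = lookup b j) \<Longrightarrow> a = (b :: nat \<Rightarrow>\<^sub>0 nat)"
  by (rule poly_mapping_eqI)

lemma diff_mono_var_add: "lookup \<mu> k \<noteq> 0 \<Longrightarrow> \<mu> - mono_var k + mono_var k = \<mu>"
  by (rule monomial_eqI) (auto simp: lookup_add lookup_minus lookup_mono_var)
lemma add_mono_var_diff_swap: "j \<noteq> k \<Longrightarrow> \<mu> + mono_var k - mono_var j = \<mu> - mono_var j + mono_var k"
  by (rule monomial_eqI) (auto simp: lookup_add lookup_minus lookup_mono_var)
lemma mono_var_add_eq_iff: "(mono_var k + \<nu> = \<mu>) = (lookup \<mu> k \<noteq> 0 \<and> \<nu> = \<mu> - mono_var k)"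
proof
  assume a: "mono_var k + \<nu> = \<mu>"
  have "lookup \<mu> k = 1 + lookup \<nu> k" unfolding a[symmetric] by (simp add: lookup_add lookup_mono_var)
  moreover have "\<nu> = \<mu> - mono_var k" unfolding a[symmetric] by simp
  ultimately show "lookup \<mu> k \<noteq> 0 \<and> \<nu> = \<mu> - mono_var k" by simp
next
  assume "lookup \<mu> k \<noteq> 0 \<and> \<nu> = \<mu> - mono_var k"
  then show "mono_var k + \<nu> = \<mu>" using diff_mono_var_add[of \<mu> k] by (simp add: add.commute)
qed

lemma Dring_sum_single: "(p::Dring) = (\<Sum>\<nu>\<in>keys p. single \<nu> (lookup p \<nu>))"
proof (rule poly_mapping_eqI)
  fix \<mu>
  have "lookup (\<Sum>\<nu>\<in>keys p. single \<nu> (lookup p \<nu>)) \<mu> = (\<Sum>\<nu>\<in>keys p. if \<nu> = \<mu> then lookup p \<nu> else 0)"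
    by (simp add: lookup_sum lookup_single when_def)
  also have "\<dots> = lookup p \<mu>" by (simp add: sum.delta in_keys_iff)
  finally show "lookup p \<mu> = lookup (\<Sum>\<nu>\<in>keys p. single \<nu> (lookup p \<nu>)) \<mu>" by simp
qed

lemma lookup_xvar_mult: "lookup (xvar k * p) \<mu> = (if lookup \<mu> k = 0 then 0 else lookup p (\<mu> - mono_var k))"
proof -
  have "xvar k * p = (\<Sum>\<nu>\<in>keys p. single (mono_var k + \<nu>) (lookup p \<nu>))"
    by (subst Dring_sum_single[of p]) (simp add: xvar_def sum_distrib_left mult_single)
  then have "lookup (xvar k * p) \<mu> = (\<Sum>\<nu>\<in>keys p. if \<nu> = \<mu> - mono_var k then (if lookup \<mu> k = 0 then 0 else lookup p \<nu>) else 0)"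
    by (simp add: lookup_sum lookup_single when_def mono_var_add_eq_iff)
  also have "\<dots> = (if lookup \<mu> k = 0 then 0 else lookup p (\<mu> - mono_var k))" by (simp add: sum.delta in_keys_iff)
  finally show ?thesis .
qed

definition pderiv_var :: "nat \<Rightarrow> Dring \<Rightarrow> Dring" where
  "pderiv_var k p = Abs_poly_mapping (\<lambda>\<mu>. of_nat (lookup \<mu> k + 1) * lookup p (\<mu> + mono_var k))"

lemma lookup_pderiv_var: "lookup (pderiv_var k p) \<mu> = of_nat (lookup \<mu> k + 1) * lookup p (\<mu> + mono_var k)"
proof -
  have "{\<mu>. of_nat (lookup \<mu> k + 1) * lookup p (\<mu> + mono_var k) \<noteq> (0::complex)} \<subseteq> (\<lambda>\<mu>. \<mu> + mono_var k) -` keys p"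
    by (auto simp: in_keys_iff)
  moreover have "finite ((\<lambda>\<mu>. \<mu> + mono_var k) -` keys p)"
    by (rule finite_vimageI) (auto simp: inj_on_def)
  ultimately have "finite {\<mu>. of_nat (lookup \<mu> k + 1) * lookup p (\<mu> + mono_var k) \<noteq> (0::complex)}"
    using finite_subset by blast
  then show ?thesis unfolding pderiv_var_def by simp
qed

lemma pderiv_var_add: "pderiv_var k (p + q) = pderiv_var k p + pderiv_var k q"
  by (rule poly_mapping_eqI) (simp add: lookup_pderiv_var lookup_add distrib_left)
lemma pderiv_var_uminus: "pderiv_var k (- p) = - pderiv_var k p"
  by (rule poly_mapping_eqI) (simp add: lookup_pderiv_var)
lemma pderiv_var_0[simp]: "pderiv_var k 0 = 0"
  by (rule poly_mapping_eqI) (simp add: lookup_pderiv_var)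
lemma pderiv_var_fsign: "pderiv_var k (fsign S x c) = fsign S x (pderiv_var k c)"
  by (simp add: fsign_def pderiv_var_uminus)

lemma pderiv_var_xvar_mult: "pderiv_var k (xvar j * p) = xvar j * pderiv_var k p + (if j = k then p else 0)"
proof (rule poly_mapping_eqI)
  fix \<mu>
  show "lookup (pderiv_var k (xvar j * p)) \<mu> = lookup (xvar j * pderiv_var k p + (if j = k then p else 0)) \<mu>"
  proof (cases "j = k")
    case True
    have l: "lookup (pderiv_var k (xvar j * p)) \<mu> = of_nat (lookup \<mu> k + 1) * lookup p \<mu>"
      using True by (simp add: lookup_pderiv_var lookup_xvar_mult lookup_add lookup_mono_var)
    have r: "lookup (xvar j * pderiv_var k p) \<mu> = of_nat (lookup \<mu> k) * lookup p \<mu>"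
      using True by (cases "lookup \<mu> k = 0") (auto simp: lookup_pderiv_var lookup_xvar_mult lookup_minus lookup_mono_var diff_mono_var_add)
    show ?thesis using True l r by (simp add: lookup_add distrib_right)
  next
    case False
    show ?thesis using False
      by (auto simp: lookup_pderiv_var lookup_xvar_mult lookup_add lookup_minus lookup_mono_var add_mono_var_diff_swap)
  qed
qed

lemma euler_identity:
  assumes "finite K" "\<forall>\<mu>\<in>keys p. keys \<mu> \<subseteq> K"
  shows "lookup (\<Sum>k\<in>K. xvar k * pderiv_var k p) \<mu> = of_nat (mdegree \<mu>) * lookup p \<mu>"
proof -
  have "lookup (\<Sum>k\<in>K. xvar k * pderiv_var k p) \<mu> = (\<Sum>k\<in>K. of_nat (lookup \<mu> k) * lookup p \<mu>)"
    unfolding lookup_sum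
  proof (rule sum.cong[OF refl])
    fix k assume "k \<in> K"
    show "lookup (xvar k * pderiv_var k p) \<mu> = of_nat (lookup \<mu> k) * lookup p \<mu>"
      by (cases "lookup \<mu> k = 0") (auto simp: lookup_xvar_mult lookup_pderiv_var lookup_minus lookup_mono_var diff_mono_var_add)
  qed
  also have "\<dots> = of_nat (\<Sum>k\<in>K. lookup \<mu> k) * lookup p \<mu>" by (simp add: sum_distrib_right)
  also have "\<dots> = of_nat (mdegree \<mu>) * lookup p \<mu>"
  proof (cases "lookup p \<mu> = 0")
    case False
    then have "keys \<mu> \<subseteq> K" using assms(2) by (simp add: in_keys_iff)
    then have "(\<Sum>k\<in>K. lookup \<mu> k) = mdegree \<mu>" unfolding mdegree_def
      using assms(1) by (intro sum.mono_neutral_right) (auto simp: in_keys_iff)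
    then show ?thesis by simp
  qed simp
  finally show ?thesis .
qed

lemma mdegree_add: "mdegree (a + b) = mdegree a + mdegree b"
proof -
  have K: "finite (keys a \<union> keys b)" by simp
  have s: "\<And>c. keys c \<subseteq> keys a \<union> keys b \<Longrightarrow> mdegree c = (\<Sum>k\<in>keys a \<union> keys b. lookup c k)"
    unfolding mdegree_def using K by (intro sum.mono_neutral_left) (auto simp: in_keys_iff)
  have "keys (a + b) \<subseteq> keys a \<union> keys b" by (rule keys_add)
  then show ?thesis using s[of "a+b"] s[of a] s[of b] by (simp add: lookup_add sum.distrib)
qed

lemma mdegree_mono_var: "mdegree (mono_var k) = 1"
  by (simp add: mdegree_def mono_var_def)

lemma mdegree_minus_mono_var: "lookup \<mu> k \<noteq> 0 \<Longrightarrow> mdegree (\<mu> - mono_var k) + 1 = mdegree \<mu>"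
  using mdegree_add[of "\<mu> - mono_var k" "mono_var k"] diff_mono_var_add[of \<mu> k] mdegree_mono_var by simp

definition neg_mode :: "nat \<Rightarrow> int" where "neg_mode n = - (2 * int n - 1)"

lemma neg_mode_inj[simp]: "neg_mode n = neg_mode m \<longleftrightarrow> n = m" unfolding neg_mode_def by simp

lemma Qsum_neg_mode: "Qsum N f = (\<Sum>n\<in>{1..N}. dmul (dvar n) (rpsi (neg_mode n) f))"
  unfolding Qsum_def neg_mode_def ..

lemma lookup_if: "lookup (if P then a else b) \<mu> = (if P then lookup a \<mu> else lookup b \<mu>)"
  by simp

lemma lookup_rpsistar_rpsi: "lookup (rpsistar x (rpsi x f)) T = (if x \<notin> T then lookup f T else 0)"
  by (simp add: lookup_rpsistar lookup_rpsi)

definition pderiv_fock :: "nat \<Rightarrow> fock \<Rightarrow> fock" where "pderiv_fock k f = Poly_Mapping.map (pderiv_var k) f"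
lemma lookup_pderiv_fock: "lookup (pderiv_fock k f) T = pderiv_var k (lookup f T)"
  unfolding pderiv_fock_def by (simp add: map.rep_eq when_def)

lemma pderiv_fock_add: "pderiv_fock k (f + g) = pderiv_fock k f + pderiv_fock k g"
  by (rule fock_eqI) (simp add: lookup_pderiv_fock lookup_add pderiv_var_add)
lemma pderiv_fock_0[simp]: "pderiv_fock k 0 = 0"
  by (rule fock_eqI) (simp add: lookup_pderiv_fock)
lemma pderiv_fock_sum: "pderiv_fock k (sum g A) = (\<Sum>i\<in>A. pderiv_fock k (g i))"
  by (induction A rule: infinite_finite_induct) (auto simp: pderiv_fock_add)
lemma pderiv_fock_rpsi: "pderiv_fock k (rpsi x f) = rpsi x (pderiv_fock k f)"
  by (rule fock_eqI) (simp add: lookup_pderiv_fock lookup_rpsi pderiv_var_fsign)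
lemma pderiv_fock_xvar: "pderiv_fock k (dmul (xvar j) f) = dmul (xvar j) (pderiv_fock k f) + (if j = k then f else 0)"
  by (rule fock_eqI) (simp add: lookup_pderiv_fock lookup_add pderiv_var_xvar_mult)
lemma all_keys_pderiv_fock: "all_keys P f \<Longrightarrow> all_keys P (pderiv_fock k f)"
  unfolding all_keys_def by (auto simp: in_keys_iff lookup_pderiv_fock)

definition homotopy :: "nat \<Rightarrow> fock \<Rightarrow> fock" where
  "homotopy M f = (\<Sum>n\<in>{1..M}. rpsistar (neg_mode n) (pderiv_fock (n - 1) f))"

lemma homotopy_0[simp]: "homotopy M 0 = 0" unfolding homotopy_def by simp

lemma Qsum_homotopy_expand:
  assumes F: "finite_states f"
  shows "Qsum M (homotopy M f) + homotopy M (Qsum M f) =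
     (\<Sum>n\<in>{1..M}. dmul (xvar (n - 1)) (pderiv_fock (n - 1) f)) + (\<Sum>n\<in>{1..M}. rpsistar (neg_mode n) (rpsi (neg_mode n) f))"
proof -
  let ?I = "{1..M}"
  define G where "G m = pderiv_fock (m - 1) f" for m
  have FG: "finite_states (G m)" for m unfolding G_def by (rule all_keys_pderiv_fock[OF F])
  have A: "Qsum M (homotopy M f) = (\<Sum>n\<in>?I. \<Sum>m\<in>?I. dmul (xvar (n - 1)) (rpsi (neg_mode n) (rpsistar (neg_mode m) (G m))))"
    unfolding Qsum_neg_mode homotopy_def dvar_eq_xvar G_def by (simp add: fock_linear_simps)
  have "homotopy M (Qsum M f) = (\<Sum>m\<in>?I. \<Sum>n\<in>?I. rpsistar (neg_mode m) (pderiv_fock (m - 1) (dmul (xvar (n - 1)) (rpsi (neg_mode n) f))))"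
    unfolding Qsum_neg_mode homotopy_def dvar_eq_xvar by (simp add: pderiv_fock_sum rpsistar_sum)
  also have "\<dots> = (\<Sum>m\<in>?I. \<Sum>n\<in>?I. dmul (xvar (n - 1)) (rpsistar (neg_mode m) (rpsi (neg_mode n) (G m))) + (if n = m then rpsistar (neg_mode m) (rpsi (neg_mode n) f) else 0))"
  proof (intro sum.cong refl)
    fix m n assume "m \<in> ?I" "n \<in> ?I"
    then have e: "(n - 1 = m - 1) = (n = m)" by auto
    show "rpsistar (neg_mode m) (pderiv_fock (m - 1) (dmul (xvar (n - 1)) (rpsi (neg_mode n) f))) =
      dmul (xvar (n - 1)) (rpsistar (neg_mode m) (rpsi (neg_mode n) (G m))) + (if n = m then rpsistar (neg_mode m) (rpsi (neg_mode n) f) else 0)"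
      unfolding pderiv_fock_xvar e G_def by (simp add: rpsistar_add rpsistar_dmul pderiv_fock_rpsi)
  qed
  also have "\<dots> = (\<Sum>n\<in>?I. \<Sum>m\<in>?I. dmul (xvar (n - 1)) (rpsistar (neg_mode m) (rpsi (neg_mode n) (G m))) + (if n = m then rpsistar (neg_mode m) (rpsi (neg_mode n) f) else 0))"
    by (rule sum.swap)
  finally have B: "homotopy M (Qsum M f) = \<dots>" .
  have "Qsum M (homotopy M f) + homotopy M (Qsum M f) = (\<Sum>n\<in>?I. \<Sum>m\<in>?I. (if n = m then dmul (xvar (n - 1)) (G n) + rpsistar (neg_mode n) (rpsi (neg_mode n) f) else 0))"
    unfolding A B sum.distrib[symmetric]
  proof (intro sum.cong refl)
    fix n m
    have "rpsi (neg_mode n) (rpsistar (neg_mode m) (G m)) + rpsistar (neg_mode m) (rpsi (neg_mode n) (G m))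
        = (if n = m then G m else 0)"
      using rpsi_rpsistar_anticomm_delta[OF FG] by simp
    then show "dmul (xvar (n - 1)) (rpsi (neg_mode n) (rpsistar (neg_mode m) (G m))) +
         (dmul (xvar (n - 1)) (rpsistar (neg_mode m) (rpsi (neg_mode n) (G m))) + (if n = m then rpsistar (neg_mode m) (rpsi (neg_mode n) f) else 0)) =
         (if n = m then dmul (xvar (n - 1)) (G n) + rpsistar (neg_mode n) (rpsi (neg_mode n) f) else 0)"
      by (auto simp: dmul_add[symmetric] add.assoc[symmetric])
  qed
  also have "\<dots> = (\<Sum>n\<in>?I. dmul (xvar (n - 1)) (G n) + rpsistar (neg_mode n) (rpsi (neg_mode n) f))"
    by (simp add: sum.delta)
  finally show ?thesis unfolding G_def by (simp add: sum.distrib)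
qed

definition scale_coeffs :: "(int set \<Rightarrow> (nat \<Rightarrow>\<^sub>0 nat) \<Rightarrow> complex) \<Rightarrow> fock \<Rightarrow> fock" where
  "scale_coeffs \<phi> f = Poly_Mapping.mapp (\<lambda>T p. Poly_Mapping.mapp (\<lambda>\<mu> c. \<phi> T \<mu> * c) p) f"

lemma lookup_scale_coeffs: "lookup (lookup (scale_coeffs \<phi> f) T) \<mu> = \<phi> T \<mu> * lookup (lookup f T) \<mu>"
  unfolding scale_coeffs_def by (auto simp: lookup_mapp when_def in_keys_iff)

lemma scale_coeffs_lookup_0: "lookup f T = 0 \<Longrightarrow> lookup (scale_coeffs \<phi> f) T = 0"
  by (rule poly_mapping_eqI) (simp add: lookup_scale_coeffs)

lemma all_keys_scale_coeffs: "all_keys P f \<Longrightarrow> all_keys P (scale_coeffs \<phi> f)"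
  unfolding all_keys_def using scale_coeffs_lookup_0 by (metis in_keys_iff)

lemma lookup_fsign: "lookup (fsign S x c) \<nu> = (if even (card {j\<in>S. x < j}) then lookup c \<nu> else - lookup c \<nu>)"
  by (simp add: fsign_def)

lemma lookup_Qsum: "lookup (lookup (Qsum M g) T) \<mu> = (\<Sum>n\<in>{1..M}. if lookup \<mu> (n - 1) = 0 then 0 else
     if neg_mode n \<in> T then (if even (card {j\<in>T - {neg_mode n}. neg_mode n < j}) then lookup (lookup g (T - {neg_mode n})) (\<mu> - mono_var (n - 1))
        else - lookup (lookup g (T - {neg_mode n})) (\<mu> - mono_var (n - 1))) else 0)"
  unfolding Qsum_neg_mode dvar_eq_xvar
  by (simp add: lookup_sum lookup_xvar_mult lookup_rpsi lookup_fsign lookup_if cong: if_cong)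

lemma Qsum_scale_coeffs:
  assumes inv: "\<And>n T \<mu>. n \<in> {1..M} \<Longrightarrow> neg_mode n \<in> T \<Longrightarrow> lookup \<mu> (n - 1) \<noteq> 0 \<Longrightarrow>
     \<phi> (T - {neg_mode n}) (\<mu> - mono_var (n - 1)) = \<phi> T \<mu>"
  shows "Qsum M (scale_coeffs \<phi> f) = scale_coeffs \<phi> (Qsum M f)"
proof (rule fock_eqI, rule poly_mapping_eqI)
  fix T \<mu>
  have "lookup (lookup (Qsum M (scale_coeffs \<phi> f)) T) \<mu> = (\<Sum>n\<in>{1..M}. \<phi> T \<mu> * (if lookup \<mu> (n - 1) = 0 then 0 else
     if neg_mode n \<in> T then (if even (card {j\<in>T - {neg_mode n}. neg_mode n < j}) then lookup (lookup f (T - {neg_mode n})) (\<mu> - mono_var (n - 1))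
        else - lookup (lookup f (T - {neg_mode n})) (\<mu> - mono_var (n - 1))) else 0))"
    unfolding lookup_Qsum lookup_scale_coeffs
  proof (rule sum.cong[OF refl])
    fix n assume n: "n \<in> {1..M}"
    show "(if lookup \<mu> (n - 1) = 0 then 0 else if neg_mode n \<in> T then if even (card {j \<in> T - {neg_mode n}. neg_mode n < j})
       then \<phi> (T - {neg_mode n}) (\<mu> - mono_var (n - 1)) * lookup (lookup f (T - {neg_mode n})) (\<mu> - mono_var (n - 1))
       else - (\<phi> (T - {neg_mode n}) (\<mu> - mono_var (n - 1)) * lookup (lookup f (T - {neg_mode n})) (\<mu> - mono_var (n - 1))) else 0) =
      \<phi> T \<mu> * (if lookup \<mu> (n - 1) = 0 then 0 else if neg_mode n \<in> T then if even (card {j \<in> T - {neg_mode n}. neg_mode n < j})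
       then lookup (lookup f (T - {neg_mode n})) (\<mu> - mono_var (n - 1)) else - lookup (lookup f (T - {neg_mode n})) (\<mu> - mono_var (n - 1)) else 0)"
      using inv[OF n] by auto
  qed
  also have "\<dots> = lookup (lookup (scale_coeffs \<phi> (Qsum M f)) T) \<mu>"
    unfolding lookup_scale_coeffs lookup_Qsum by (simp add: sum_distrib_left)
  finally show "lookup (lookup (Qsum M (scale_coeffs \<phi> f)) T) \<mu> = lookup (lookup (scale_coeffs \<phi> (Qsum M f)) T) \<mu>" .
qed

text \<open>By \<open>Qsum_homotopy\<close>, \<open>Q H + H Q\<close> multiplies the coefficient of \<open>\<mu>\<close> in state \<open>T\<close>
  by \<open>weight M T \<mu>\<close>: the Euler operator plus the number of holes among the first \<open>M\<close>
  negative modes.\<close>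

definition hole_count :: "nat \<Rightarrow> int set \<Rightarrow> nat" where "hole_count M T = card {n\<in>{1..M}. neg_mode n \<notin> T}"
definition weight :: "nat \<Rightarrow> int set \<Rightarrow> (nat \<Rightarrow>\<^sub>0 nat) \<Rightarrow> complex" where
  "weight M T \<mu> = of_nat (mdegree \<mu> + hole_count M T)"

lemma hole_count_remove: "n \<in> {1..M} \<Longrightarrow> neg_mode n \<in> T \<Longrightarrow> hole_count M (T - {neg_mode n}) = hole_count M T + 1"
proof -
  assume n: "n \<in> {1..M}" and t: "neg_mode n \<in> T"
  have "{n'\<in>{1..M}. neg_mode n' \<notin> T - {neg_mode n}} = insert n {n'\<in>{1..M}. neg_mode n' \<notin> T}"
    using n t by auto
  moreover have "n \<notin> {n'\<in>{1..M}. neg_mode n' \<notin> T}" using t by auto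
  ultimately show ?thesis unfolding hole_count_def by simp
qed

lemma weight_remove: "n \<in> {1..M} \<Longrightarrow> neg_mode n \<in> T \<Longrightarrow> lookup \<mu> (n - 1) \<noteq> 0 \<Longrightarrow>
     weight M (T - {neg_mode n}) (\<mu> - mono_var (n - 1)) = weight M T \<mu>"
  unfolding weight_def using hole_count_remove mdegree_minus_mono_var by (metis add.commute add.left_commute)

lemma Qsum_homotopy:
  assumes F: "finite_states f" and V: "\<And>T \<mu>. lookup (lookup f T) \<mu> \<noteq> 0 \<Longrightarrow> keys \<mu> \<subseteq> {0..<M}"
  shows "Qsum M (homotopy M f) + homotopy M (Qsum M f) = scale_coeffs (weight M) f"
proof (rule fock_eqI, rule poly_mapping_eqI)
  fix T \<mu>
  have e1: "lookup (lookup (\<Sum>n\<in>{1..M}. dmul (xvar (n - 1)) (pderiv_fock (n - 1) f)) T) \<mu> = of_nat (mdegree \<mu>) * lookup (lookup f T) \<mu>"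
  proof -
    have "lookup (\<Sum>n\<in>{1..M}. dmul (xvar (n - 1)) (pderiv_fock (n - 1) f)) T = (\<Sum>n\<in>{1..M}. xvar (n - 1) * pderiv_var (n - 1) (lookup f T))"
      by (simp add: lookup_sum lookup_pderiv_fock)
    also have "\<dots> = (\<Sum>k\<in>{0..<M}. xvar k * pderiv_var k (lookup f T))"
    proof (rule sum.reindex_bij_witness[of _ "\<lambda>k. k + 1" "\<lambda>n. n - 1"]) qed auto
    finally have "lookup (\<Sum>n\<in>{1..M}. dmul (xvar (n - 1)) (pderiv_fock (n - 1) f)) T = (\<Sum>k\<in>{0..<M}. xvar k * pderiv_var k (lookup f T))" .
    moreover have "\<forall>\<nu>\<in>keys (lookup f T). keys \<nu> \<subseteq> {0..<M}" using V by (auto simp: in_keys_iff)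
    ultimately show ?thesis using euler_identity[of "{0..<M}" "lookup f T" \<mu>] by simp
  qed
  have e2: "lookup (lookup (\<Sum>n\<in>{1..M}. rpsistar (neg_mode n) (rpsi (neg_mode n) f)) T) \<mu> = of_nat (hole_count M T) * lookup (lookup f T) \<mu>"
  proof -
    have "lookup (lookup (\<Sum>n\<in>{1..M}. rpsistar (neg_mode n) (rpsi (neg_mode n) f)) T) \<mu> = (\<Sum>n\<in>{1..M}. if neg_mode n \<notin> T then lookup (lookup f T) \<mu> else 0)"
      by (simp add: lookup_sum lookup_rpsistar_rpsi lookup_if cong: if_cong)
    also have "\<dots> = (\<Sum>n\<in>{n\<in>{1..M}. neg_mode n \<notin> T}. lookup (lookup f T) \<mu>)"
      by (rule sum.inter_filter[symmetric]) simp
    finally show ?thesis unfolding hole_count_def by (simp only: sum_constant)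
  qed
  show "lookup (lookup (Qsum M (homotopy M f) + homotopy M (Qsum M f)) T) \<mu> = lookup (lookup (scale_coeffs (weight M) f) T) \<mu>"
    unfolding Qsum_homotopy_expand[OF F] lookup_scale_coeffs lookup_add e1 e2 weight_def by (simp add: distrib_right)
qed

lemma card_holes:
  assumes "window_state N T"
  shows "card {n\<in>{1..N}. neg_mode n \<notin> T} = card (vac (-1) - T)"
proof -
  have "neg_mode ` {n\<in>{1..N}. neg_mode n \<notin> T} = vac (-1) - T"
  proof
    show "neg_mode ` {n \<in> {1..N}. neg_mode n \<notin> T} \<subseteq> vac (- 1) - T" unfolding vac_def neg_mode_def by auto
  next
    show "vac (- 1) - T \<subseteq> neg_mode ` {n \<in> {1..N}. neg_mode n \<notin> T}"
    proof
      fix x assume x: "x \<in> vac (-1) - T"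
      then have xo: "odd x" "x \<le> -1" "\<not> x \<le> -(2 * int N + 1)" using assms unfolding vac_def window_state_def by auto
      define n where "n = nat ((1 - x) div 2)"
      have "int n = (1 - x) div 2" unfolding n_def using xo by simp
      then have "neg_mode n = x" "1 \<le> int n" "int n \<le> int N" using xo unfolding neg_mode_def by presburger+
      then show "x \<in> neg_mode ` {n \<in> {1..N}. neg_mode n \<notin> T}" using x by force
    qed
  qed
  moreover have "inj_on neg_mode {n\<in>{1..N}. neg_mode n \<notin> T}" by (auto simp: inj_on_def)
  ultimately show ?thesis using card_image by metis
qed

lemma hole_count_pos:
  assumes "odd m" "m \<le> -3" "charge_state m T" "window_state M T"
  shows "hole_count M T \<noteq> 0"
proof -
  have "rel_charge (-1) T = (m + 1) div 2" by (rule rel_charge_minus1[OF assms(1,3)])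
  then have "rel_charge (-1) T < 0" using assms(1,2) by presburger
  then have "card (vac (-1) - T) \<noteq> 0" unfolding rel_charge_def by linarith
  then show ?thesis unfolding hole_count_def card_holes[OF assms(4)] .
qed

lemma variables_bounded: "\<exists>V. \<forall>T \<mu>. lookup (lookup (f::fock) T) \<mu> \<noteq> 0 \<longrightarrow> keys \<mu> \<subseteq> {0..<V}"
proof -
  define X where "X = (\<Union>T\<in>keys f. \<Union>\<mu>\<in>keys (lookup f T). keys \<mu>)"
  have "finite X" unfolding X_def by simp
  then obtain V where V: "\<forall>k\<in>X. k < V" using finite_nat_set_iff_bounded by blast
  have "keys \<mu> \<subseteq> {0..<V}" if "lookup (lookup f T) \<mu> \<noteq> 0" for T \<mu>
  proof -
    have "T \<in> keys f" "\<mu> \<in> keys (lookup f T)" using that by (auto simp: in_keys_iff)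
    then have "keys \<mu> \<subseteq> X" unfolding X_def by blast
    then show ?thesis using V by auto
  qed
  then show ?thesis by blast
qed

lemma scale_coeffs_0[simp]: "scale_coeffs \<phi> 0 = 0"
  by (rule fock_eqI) (simp add: scale_coeffs_lookup_0)

lemma scale_coeffs_inverse:
  assumes "\<And>T \<mu>. lookup (lookup f T) \<mu> \<noteq> 0 \<Longrightarrow> \<psi> T \<mu> * \<phi> T \<mu> = 1"
  shows "scale_coeffs \<psi> (scale_coeffs \<phi> f) = f"
  by (rule fock_eqI, rule poly_mapping_eqI) (use assms in \<open>force simp: lookup_scale_coeffs\<close>)

lemma weight_nonzero:
  assumes o: "odd m" and m: "m \<le> -3" and f: "f \<in> DH m" and b: "windowed M f"
    and \<mu>: "lookup (lookup f T) \<mu> \<noteq> 0"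
  shows "weight M T \<mu> \<noteq> 0"
proof -
  have "lookup f T \<noteq> 0" using \<mu> by auto
  then have "charge_state m T" "window_state M T"
    using f b all_keysD unfolding DH_iff_all_keys by blast+
  then have "hole_count M T \<noteq> 0" using hole_count_pos[OF o m] by blast
  then show ?thesis unfolding weight_def by (metis add_is_0 of_nat_eq_0_iff)
qed

lemma DH_homotopy: "odd m \<Longrightarrow> f \<in> DH m \<Longrightarrow> homotopy M f \<in> DH (m - 2)"
  unfolding homotopy_def DH_iff_all_keys by (intro all_keys_sum all_keys_pderiv_fock DH_rpsistar[unfolded DH_iff_all_keys])

lemma windowed_homotopy: "windowed M f \<Longrightarrow> windowed M (homotopy M f)"
  unfolding homotopy_def
  by (intro all_keys_sum windowed_rpsistar all_keys_pderiv_fock) (auto simp: neg_mode_def)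

lemma Qop_exact:
  assumes o: "odd m" and m: "m \<le> -3" and f: "f \<in> DH m" and q: "Qop f = 0"
  shows "\<exists>g\<in>DH (m - 2). Qop g = f"
proof -
  obtain N where "windowed N f" using DH_windowed[OF f] by blast
  obtain V where V: "\<And>T \<mu>. lookup (lookup f T) \<mu> \<noteq> 0 \<Longrightarrow> keys \<mu> \<subseteq> {0..<V}"
    using variables_bounded by blast
  define M where "M = max N V"
  have b: "windowed M f" using windowed_mono[OF \<open>windowed N f\<close>] unfolding M_def by simp
  have VM: "\<And>T \<mu>. lookup (lookup f T) \<mu> \<noteq> 0 \<Longrightarrow> keys \<mu> \<subseteq> {0..<M}"
    using V unfolding M_def by fastforce
  define g where "g = scale_coeffs (\<lambda>T \<mu>. 1 / weight M T \<mu>) f"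
  have "Qsum M g = scale_coeffs (\<lambda>T \<mu>. 1 / weight M T \<mu>) (Qsum M f)"
    unfolding g_def by (rule Qsum_scale_coeffs) (use weight_remove in simp)
  then have "Qsum M g = 0" using q Qop_eq_Qsum[OF b] by simp
  moreover have "keys \<mu> \<subseteq> {0..<M}" if "lookup (lookup g T) \<mu> \<noteq> 0" for T \<mu>
    using VM that unfolding g_def lookup_scale_coeffs by force
  ultimately have "Qsum M (homotopy M g) = scale_coeffs (weight M) g"
    using Qsum_homotopy[of g M] all_keys_scale_coeffs[OF DH_finite_states[OF f]] unfolding g_def by simp
  also have "\<dots> = f"
    unfolding g_def by (rule scale_coeffs_inverse) (simp add: weight_nonzero[OF o m f b])
  finally have "Qop (homotopy M g) = f"
    using Qop_eq_Qsum[OF windowed_homotopy] all_keys_scale_coeffs[OF b] unfolding g_def by metis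
  moreover have "homotopy M g \<in> DH (m - 2)"
    using DH_homotopy[OF o] all_keys_scale_coeffs f unfolding g_def DH_iff_all_keys by metis
  ultimately show ?thesis by blast
qed

section \<open>Injectivity of \<open>C\<close> in negative charge\<close>

definition pos_mode :: "nat \<Rightarrow> int" where "pos_mode n = 2 * int n - 1"
lemma pos_mode_inj[simp]: "pos_mode n = pos_mode m \<longleftrightarrow> n = m" unfolding pos_mode_def by simp
lemma pos_mode_neg_mode[simp]: "m \<ge> 1 \<Longrightarrow> n \<ge> 1 \<Longrightarrow> pos_mode n \<noteq> neg_mode m" "m \<ge> 1 \<Longrightarrow> n \<ge> 1 \<Longrightarrow> neg_mode m \<noteq> pos_mode n" unfolding pos_mode_def neg_mode_def by auto

text \<open>\<open>Esum\<close> is the part of \<open>C\<close> of polynomial degree \<open>0\<close>; the coefficients of \<open>Fsum\<close>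
  are chosen so that \<open>[E, F]\<close> acts on \<open>DH m\<close> as the scalar \<open>(m + 1) div 2\<close>.\<close>

definition pair_up :: "nat \<Rightarrow> fock \<Rightarrow> fock" where "pair_up n f = rpsi (neg_mode n) (rpsi (pos_mode n) f)"
definition pair_down :: "nat \<Rightarrow> fock \<Rightarrow> fock" where "pair_down n f = rpsistar (pos_mode n) (rpsistar (neg_mode n) f)"
definition pair_coeff :: "nat \<Rightarrow> complex" where "pair_coeff n = 2 * (2 * of_nat n - 1)"
definition Esum :: "nat \<Rightarrow> fock \<Rightarrow> fock" where "Esum N f = (\<Sum>n\<in>{1..N}. dmul (single 0 (pair_coeff n)) (pair_up n f))"
definition Fsum :: "nat \<Rightarrow> fock \<Rightarrow> fock" where "Fsum N f = (\<Sum>n\<in>{1..N}. dmul (single 0 (1 / pair_coeff n)) (pair_down n f))"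

lemma pair_coeff_nonzero: "n \<ge> 1 \<Longrightarrow> pair_coeff n \<noteq> 0"
proof -
  assume "n \<ge> 1"
  then have "(2 * of_nat n - 1 :: complex) = of_nat (2 * n - 1)" by (simp add: of_nat_diff)
  moreover have "2 * n - 1 \<noteq> 0" using \<open>n \<ge> 1\<close> by simp
  ultimately have "(2 * of_nat n - 1 :: complex) \<noteq> 0" by (metis of_nat_eq_0_iff)
  then show ?thesis unfolding pair_coeff_def by simp
qed

lemma pair_up_sum: "pair_up n (sum g A) = (\<Sum>i\<in>A. pair_up n (g i))" unfolding pair_up_def by (simp add: fock_linear_simps)
lemma pair_up_dmul: "pair_up n (dmul d f) = dmul d (pair_up n f)" unfolding pair_up_def by (simp add: fock_linear_simps)
lemma pair_down_sum: "pair_down n (sum g A) = (\<Sum>i\<in>A. pair_down n (g i))" unfolding pair_down_def by (simp add: fock_linear_simps)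
lemma pair_down_dmul: "pair_down n (dmul d f) = dmul d (pair_down n f)" unfolding pair_down_def by (simp add: fock_linear_simps)

lemma rpsi_rpsistar_rpsistar_comm:
  assumes "x \<noteq> y" "x \<noteq> z" "finite_states g"
  shows "rpsi x (rpsistar y (rpsistar z g)) = rpsistar y (rpsistar z (rpsi x g))"
proof -
  have "rpsi x (rpsistar y (rpsistar z g)) = - rpsistar y (rpsi x (rpsistar z g))"
    by (rule rpsi_rpsistar_anticomm[OF assms(1) finite_states_rpsistar[OF assms(3)]])
  also have "\<dots> = rpsistar y (rpsistar z (rpsi x g))"
    by (simp add: rpsi_rpsistar_anticomm[OF assms(2) assms(3)] rpsistar_uminus)
  finally show ?thesis .
qed

lemma pair_up_down_comm:
  assumes "n \<ge> 1" "m \<ge> 1" "n \<noteq> m" "finite_states f"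
  shows "pair_up n (pair_down m f) = pair_down m (pair_up n f)"
proof -
  have "rpsi (pos_mode n) (pair_down m f) = pair_down m (rpsi (pos_mode n) f)"
    unfolding pair_down_def by (rule rpsi_rpsistar_rpsistar_comm) (use assms in auto)
  moreover have "rpsi (neg_mode n) (pair_down m (rpsi (pos_mode n) f)) = pair_down m (rpsi (neg_mode n) (rpsi (pos_mode n) f))"
    unfolding pair_down_def by (rule rpsi_rpsistar_rpsistar_comm) (use assms in \<open>auto intro: finite_states_rpsi\<close>)
  ultimately show ?thesis unfolding pair_up_def by simp
qed

lemma lookup_pair_up_down: "n \<ge> 1 \<Longrightarrow> lookup (pair_up n (pair_down n f)) T = (if pos_mode n \<in> T \<and> neg_mode n \<in> T then lookup f T else 0)"
proof -
  assume n: "n \<ge> 1"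
  define a where "a = neg_mode n"
  define p where "p = pos_mode n"
  have ap: "a \<noteq> p" using n unfolding a_def p_def by simp
  show ?thesis
  proof (cases "p \<in> T \<and> a \<in> T")
    case True
    define U where "U = T - {a} - {p}"
    have s: "p \<in> T - {a}" "p \<notin> U" "a \<notin> insert p U" "insert p U = T - {a}" "insert a (T - {a}) = T"
      "insert p (T - {a}) = T - {a}" "insert a (insert p (T - {a})) = T"
      using True ap unfolding U_def by auto
    show ?thesis using True s
      unfolding pair_up_def pair_down_def a_def[symmetric] p_def[symmetric] U_def[symmetric]
      by (simp add: lookup_rpsi lookup_rpsistar)
  next
    case False
    then show ?thesis unfolding pair_up_def pair_down_def a_def[symmetric] p_def[symmetric]
      by (auto simp: lookup_rpsi lookup_rpsistar)
  qed
qed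

lemma lookup_pair_down_up: "n \<ge> 1 \<Longrightarrow> lookup (pair_down n (pair_up n f)) T = (if pos_mode n \<notin> T \<and> neg_mode n \<notin> T then lookup f T else 0)"
proof -
  assume n: "n \<ge> 1"
  define a where "a = neg_mode n"
  define p where "p = pos_mode n"
  have ap: "a \<noteq> p" using n unfolding a_def p_def by simp
  show ?thesis
  proof (cases "p \<notin> T \<and> a \<notin> T")
    case True
    have s: "a \<notin> insert p T" "insert a (insert p T) - {a} = insert p T" "p \<in> insert p T"
       "insert p T - {p} = T"
      using True ap by auto
    show ?thesis using True s
      unfolding pair_up_def pair_down_def a_def[symmetric] p_def[symmetric]
      by (simp add: lookup_rpsi lookup_rpsistar)
  next
    case False
    then show ?thesis unfolding pair_up_def pair_down_def a_def[symmetric] p_def[symmetric]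
      by (auto simp: lookup_rpsi lookup_rpsistar)
  qed
qed

lemma single_0_mult: "single 0 (a::complex) * single 0 b = single 0 (a * b)"
  by (simp add: mult_single)

lemma Esum_Fsum_commutator_expand:
  assumes F: "finite_states f"
  shows "Esum N (Fsum N f) - Fsum N (Esum N f) = (\<Sum>n\<in>{1..N}. pair_up n (pair_down n f) - pair_down n (pair_up n f))"
proof -
  let ?I = "{1..N}"
  have A: "Esum N (Fsum N f) = (\<Sum>n\<in>?I. \<Sum>m\<in>?I. dmul (single 0 (pair_coeff n * (1 / pair_coeff m))) (pair_up n (pair_down m f)))"
    unfolding Esum_def Fsum_def by (simp add: pair_up_sum pair_up_dmul dmul_sum dmul_dmul single_0_mult)
  have "Fsum N (Esum N f) = (\<Sum>m\<in>?I. \<Sum>n\<in>?I. dmul (single 0 (pair_coeff n * (1 / pair_coeff m))) (pair_down m (pair_up n f)))"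
    unfolding Esum_def Fsum_def by (simp add: pair_down_sum pair_down_dmul dmul_sum dmul_dmul single_0_mult mult.commute)
  also have "\<dots> = (\<Sum>n\<in>?I. \<Sum>m\<in>?I. dmul (single 0 (pair_coeff n * (1 / pair_coeff m))) (pair_down m (pair_up n f)))"
    by (rule sum.swap)
  finally have B: "Fsum N (Esum N f) = \<dots>" .
  have "Esum N (Fsum N f) - Fsum N (Esum N f) = (\<Sum>n\<in>?I. \<Sum>m\<in>?I. if n = m then pair_up n (pair_down n f) - pair_down n (pair_up n f) else 0)"
    unfolding A B sum_subtractf[symmetric]
  proof (intro sum.cong refl)
    fix n m assume n: "n \<in> ?I" and m: "m \<in> ?I"
    show "dmul (single 0 (pair_coeff n * (1 / pair_coeff m))) (pair_up n (pair_down m f)) - dmul (single 0 (pair_coeff n * (1 / pair_coeff m))) (pair_down m (pair_up n f)) =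
      (if n = m then pair_up n (pair_down n f) - pair_down n (pair_up n f) else 0)"
    proof (cases "n = m")
      case True
      then have "pair_coeff n * (1 / pair_coeff m) = 1" using pair_coeff_nonzero[of n] n by simp
      then show ?thesis using True by simp
    next
      case False
      then show ?thesis using pair_up_down_comm[OF _ _ False F] n m by simp
    qed
  qed
  also have "\<dots> = (\<Sum>n\<in>?I. pair_up n (pair_down n f) - pair_down n (pair_up n f))" by (simp add: sum.delta)
  finally show ?thesis .
qed

lemma card_particles:
  assumes "window_state N T" "\<forall>x\<in>T. odd x"
  shows "card {n\<in>{1..N}. pos_mode n \<in> T} = card (T - vac (-1))"
proof -
  have "pos_mode ` {n\<in>{1..N}. pos_mode n \<in> T} = T - vac (-1)"
  proof
    show "pos_mode ` {n \<in> {1..N}. pos_mode n \<in> T} \<subseteq> T - vac (- 1)" unfolding vac_def pos_mode_def by auto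
  next
    show "T - vac (- 1) \<subseteq> pos_mode ` {n \<in> {1..N}. pos_mode n \<in> T}"
    proof
      fix x assume x: "x \<in> T - vac (-1)"
      then have xo: "odd x" "x > -1" "x \<le> 2 * int N - 1" using assms unfolding vac_def window_state_def by auto
      define n where "n = nat ((x + 1) div 2)"
      have "int n = (x + 1) div 2" unfolding n_def using xo by simp
      then have "pos_mode n = x" "1 \<le> int n" "int n \<le> int N" using xo unfolding pos_mode_def by presburger+
      then show "x \<in> pos_mode ` {n \<in> {1..N}. pos_mode n \<in> T}" using x by force
    qed
  qed
  moreover have "inj_on pos_mode {n\<in>{1..N}. pos_mode n \<in> T}" by (auto simp: inj_on_def)
  ultimately show ?thesis using card_image by metis
qed

lemma Esum_Fsum_commutator:
  assumes o: "odd m" and f: "f \<in> DH m" and b: "windowed N f"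
  shows "Esum N (Fsum N f) - Fsum N (Esum N f) = dmul (of_int ((m + 1) div 2)) f"
proof (rule fock_eqI)
  fix T
  let ?I = "{1..N}"
  define c where "c = lookup f T"
  have "lookup (Esum N (Fsum N f) - Fsum N (Esum N f)) T =
    (\<Sum>n\<in>?I. (if pos_mode n \<in> T then c else 0) - (if neg_mode n \<notin> T then c else 0))"
    unfolding Esum_Fsum_commutator_expand[OF DH_finite_states[OF f]] lookup_sum
    by (rule sum.cong[OF refl]) (auto simp: lookup_minus lookup_pair_up_down lookup_pair_down_up c_def)
  also have "\<dots> = (\<Sum>n\<in>{n\<in>?I. pos_mode n \<in> T}. c) - (\<Sum>n\<in>{n\<in>?I. neg_mode n \<notin> T}. c)"
    by (simp only: sum_subtractf sum.inter_filter[OF finite_atLeastAtMost])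
  also have "\<dots> = of_int (int (card {n\<in>?I. pos_mode n \<in> T}) - int (card {n\<in>?I. neg_mode n \<notin> T})) * c"
    by (simp only: sum_constant) (simp add: algebra_simps)
  also have "\<dots> = lookup (dmul (of_int ((m + 1) div 2)) f) T"
  proof (cases "c = 0")
    case False
    then have cs: "charge_state m T" "window_state N T" using f b all_keysD unfolding DH_iff_all_keys c_def by blast+
    then have "\<forall>x\<in>T. odd x" unfolding charge_state_def by auto
    then have "int (card {n\<in>?I. pos_mode n \<in> T}) - int (card {n\<in>?I. neg_mode n \<notin> T}) = rel_charge (-1) T"
      unfolding rel_charge_def using card_particles[OF cs(2)] card_holes[OF cs(2)] by simp
    also have "\<dots> = (m + 1) div 2" by (rule rel_charge_minus1[OF o cs(1)])
    finally show ?thesis by (simp add: c_def)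
  qed (simp add: c_def)
  finally show "lookup (Esum N (Fsum N f) - Fsum N (Esum N f)) T = lookup (dmul (of_int ((m + 1) div 2)) f) T" .
qed

lemma Esum_0[simp]: "Esum N 0 = 0" unfolding Esum_def pair_up_def by simp
lemma Fsum_0[simp]: "Fsum N 0 = 0" unfolding Fsum_def pair_down_def by simp
lemma dmul_comm: "dmul a (dmul b g) = dmul b (dmul a g)" by (simp add: dmul_dmul mult.commute)
lemma Fsum_dmul: "Fsum N (dmul d f) = dmul d (Fsum N f)"
  unfolding Fsum_def by (simp add: pair_down_dmul dmul_sum dmul_comm[of _ d])

lemma DH_Fsum: "odd m \<Longrightarrow> f \<in> DH m \<Longrightarrow> Fsum N f \<in> DH (m - 4)"
proof -
  assume o: "odd m" and f: "f \<in> DH m"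
  have "Fsum N f \<in> DH (m - 2 - 2)" unfolding Fsum_def pair_down_def
    by (intro DH_sum DH_dmul DH_rpsistar) (use o f in \<open>auto intro: DH_rpsistar\<close>)
  then show ?thesis by simp
qed

lemma windowed_Fsum: "windowed N f \<Longrightarrow> windowed N (Fsum N f)"
  unfolding Fsum_def pair_down_def
  by (intro all_keys_sum all_keys_dmul windowed_rpsistar) (auto simp: pos_mode_def neg_mode_def)

lemma sl2_step:
  assumes "odd m" "g \<in> DH m" "windowed N g"
  shows "Esum N (Fsum N g) = Fsum N (Esum N g) + dmul (of_int ((m + 1) div 2)) g"
  using Esum_Fsum_commutator[OF assms] by (simp add: algebra_simps)

lemma dmul_of_int_eq_0: "dmul (of_int z) g = 0 \<Longrightarrow> z \<noteq> 0 \<Longrightarrow> g = 0"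
proof -
  assume a: "dmul (of_int z) g = 0" and z: "z \<noteq> 0"
  show "g = 0"
  proof (rule fock_eqI)
    fix T
    have "of_int z * lookup g T = 0" using a by (metis lookup_dmul lookup_zero)
    moreover have "(of_int z :: Dring) \<noteq> 0" using z by simp
    ultimately show "lookup g T = lookup 0 T" by simp
  qed
qed

lemma all_keys_False: "all_keys (\<lambda>S. False) g \<Longrightarrow> g = 0"
  by (rule fock_eqI) (use all_keysD in fastforce)

text \<open>A window of \<open>N\<close> negative modes holds at most \<open>N\<close> holes.\<close>

lemma DH_windowed_eq_0:
  assumes o: "odd m" and f: "f \<in> DH m" and b: "windowed N f" and m: "(m + 1) div 2 < - int N"
  shows "f = 0"
proof (rule all_keys_False)
  show "all_keys (\<lambda>S. False) f"
  proof (rule all_keys_mono[OF all_keys_conj[THEN iffD2, OF conjI[OF f[unfolded DH_iff_all_keys] b]]])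
    fix T assume T: "charge_state m T \<and> window_state N T"
    have "rel_charge (-1) T = (m + 1) div 2" using rel_charge_minus1[OF o] T by blast
    moreover have "card {n\<in>{1..N}. neg_mode n \<notin> T} \<le> card {1..N}" by (rule card_mono) auto
    then have "int (card (vac (-1) - T)) \<le> int N" using card_holes[of N T] T by simp
    ultimately show False unfolding rel_charge_def using m by linarith
  qed
qed

lemma DH_Fsum_power: "odd m \<Longrightarrow> f \<in> DH m \<Longrightarrow> (Fsum N ^^ j) f \<in> DH (m - 4 * int j)"
proof (induction j)
  case (Suc j)
  then have "Fsum N ((Fsum N ^^ j) f) \<in> DH (m - 4 * int j - 4)" by (intro DH_Fsum) auto
  then show ?case by (simp add: algebra_simps)
qed simp

lemma windowed_Fsum_power: "windowed N f \<Longrightarrow> windowed N ((Fsum N ^^ j) f)"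
  by (induction j) (simp_all add: windowed_Fsum)

text \<open>The lowest-weight computation for \<open>sl\<^sub>2\<close>: if \<open>E f = 0\<close>, then \<open>E (F\<^bsup>j+1\<^esup> f)\<close>
  is \<open>F\<^bsup>j\<^esup> f\<close> times the sum of the values of \<open>[E, F]\<close> on \<open>f, F f, \<dots>, F\<^bsup>j\<^esup> f\<close>.\<close>

lemma Esum_Fsum_power:
  assumes o: "odd m" and f: "f \<in> DH m" and b: "windowed N f" and e: "Esum N f = 0"
  shows "Esum N ((Fsum N ^^ Suc j) f) =
    dmul (of_int (\<Sum>i\<in>{0..j}. (m - 4 * int i + 1) div 2)) ((Fsum N ^^ j) f)"
proof (induction j)
  case 0
  show ?case using sl2_step[OF o f b] e by simp
next
  case (Suc j)
  let ?g = "(Fsum N ^^ Suc j) f"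
  have g: "?g \<in> DH (m - 4 * int (Suc j))" "windowed N ?g"
    using DH_Fsum_power[OF o f] windowed_Fsum_power[OF b] by blast+
  have "Esum N (Fsum N ?g) = Fsum N (Esum N ?g) + dmul (of_int ((m - 4 * int (Suc j) + 1) div 2)) ?g"
    using sl2_step[OF _ g] o by simp
  also have "\<dots> = dmul (of_int (\<Sum>i\<in>{0..Suc j}. (m - 4 * int i + 1) div 2)) ?g"
    unfolding Suc.IH by (simp add: Fsum_dmul dmul_add_left[symmetric])
  finally show ?case by simp
qed

lemma Esum_injective:
  assumes o: "odd m" and m: "m \<le> -3" and f: "f \<in> DH m" and b: "windowed N f" and e: "Esum N f = 0"
  shows "f = 0"
proof -
  have nonzero: "(\<Sum>i\<in>{0..j}. (m - 4 * int i + 1) div 2) \<noteq> 0" for j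
  proof -
    have "(\<Sum>i\<in>{0..j}. (m - 4 * int i + 1) div 2) \<le> (\<Sum>i\<in>{0..j}. -1)"
      by (intro sum_mono) (use m in linarith)
    then show ?thesis by simp
  qed
  have "(Fsum N ^^ (N - i)) f = 0" if "i \<le> N" for i
    using that
  proof (induction i)
    case 0
    show ?case
      by (rule DH_windowed_eq_0[OF _ DH_Fsum_power[OF o f] windowed_Fsum_power[OF b]]) (use o m in auto)
  next
    case (Suc i)
    then have "Suc (N - Suc i) = N - i" by simp
    then have "Esum N ((Fsum N ^^ Suc (N - Suc i)) f) = 0" using Suc by simp
    then show ?case
      using Esum_Fsum_power[OF o f b e] dmul_of_int_eq_0 nonzero by metis
  qed
  from this[of N] show "f = 0" by simp
qed

definition Gsum :: "nat \<Rightarrow> fock \<Rightarrow> fock" where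
  "Gsum N f = (\<Sum>n\<in>{1..N}. rpsi (neg_mode n) (\<Sum>l\<in>{1..n+N}. dmul (Pcoef n l) (rpsi (2 * int n - 1 - 2 * int l) f)))"

lemma Csum_eq_Esum_minus_Gsum: "Csum N f = Esum N f - Gsum N f"
  unfolding Csum_def psitilde_sum_def Esum_def Gsum_def pair_up_def
  by (simp add: rpsi_diff rpsi_dmul sum_subtractf neg_mode_def pos_mode_def pair_coeff_def)

definition degree_ge :: "nat \<Rightarrow> fock \<Rightarrow> bool" where
  "degree_ge d f \<longleftrightarrow> (\<forall>T \<mu>. lookup (lookup f T) \<mu> \<noteq> 0 \<longrightarrow> d \<le> mdegree \<mu>)"

lemma degree_ge_rpsi: "degree_ge d f \<Longrightarrow> degree_ge d (rpsi x f)"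
  unfolding degree_ge_def by (auto simp: lookup_rpsi lookup_fsign split: if_splits)
lemma degree_ge_sum: "(\<And>i. i \<in> A \<Longrightarrow> degree_ge d (g i)) \<Longrightarrow> degree_ge d (sum g A)"
proof -
  assume a: "\<And>i. i \<in> A \<Longrightarrow> degree_ge d (g i)"
  show ?thesis unfolding degree_ge_def
  proof (intro allI impI)
    fix T \<mu> assume "lookup (lookup (sum g A) T) \<mu> \<noteq> 0"
    then have "(\<Sum>i\<in>A. lookup (lookup (g i) T) \<mu>) \<noteq> 0" by (simp add: lookup_sum)
    then obtain i where "i \<in> A" "lookup (lookup (g i) T) \<mu> \<noteq> 0" by (meson sum.neutral)
    then show "d \<le> mdegree \<mu>" using a unfolding degree_ge_def by blast
  qed
qed

lemma mdegree_keys_Pcoef: "\<mu> \<in> keys (Pcoef n l) \<Longrightarrow> mdegree \<mu> = 2"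
proof -
  assume a: "\<mu> \<in> keys (Pcoef n l)"
  have e: "single 0 (1 / of_nat (n - j)) * dvar (l + 1 - j) * dvar j
      = single (mono_var (l + 1 - j - 1) + mono_var (j - 1)) (1 / of_nat (n - j))" for j
    by (simp add: dvar_def mono_var_def mult_single)
  have "keys (Pcoef n l) \<subseteq> (\<Union>j\<in>{j. 1 \<le> j \<and> j < n \<and> j \<le> l}. keys (single (mono_var (l + 1 - j - 1) + mono_var (j - 1)) (1 / of_nat (n - j) :: complex)))"
    unfolding Pcoef_def e by (rule keys_sum)
  then obtain j where "\<mu> \<in> keys (single (mono_var (l + 1 - j - 1) + mono_var (j - 1)) (1 / of_nat (n - j) :: complex))"
    using a by blast
  then have "\<mu> = mono_var (l + 1 - j - 1) + mono_var (j - 1)" by (simp split: if_splits)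
  then show ?thesis by (simp add: mdegree_add mdegree_mono_var)
qed

lemma degree_ge_Pcoef: "degree_ge d f \<Longrightarrow> degree_ge (d + 2) (dmul (Pcoef n l) f)"
  unfolding degree_ge_def
proof (intro allI impI)
  fix T \<mu>
  assume a: "\<forall>T \<mu>. lookup (lookup f T) \<mu> \<noteq> 0 \<longrightarrow> d \<le> mdegree \<mu>" and b: "lookup (lookup (dmul (Pcoef n l) f) T) \<mu> \<noteq> 0"
  then have "\<mu> \<in> keys (Pcoef n l * lookup f T)" by (simp add: in_keys_iff)
  then obtain x y where "x \<in> keys (Pcoef n l)" "y \<in> keys (lookup f T)" "\<mu> = x + y"
    using keys_mult by blast
  then show "d + 2 \<le> mdegree \<mu>" using a mdegree_keys_Pcoef by (auto simp: mdegree_add in_keys_iff)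
qed

lemma degree_ge_Gsum: "degree_ge d f \<Longrightarrow> degree_ge (d + 2) (Gsum N f)"
  unfolding Gsum_def by (intro degree_ge_sum degree_ge_rpsi degree_ge_Pcoef)

definition component :: "(nat \<Rightarrow>\<^sub>0 nat) \<Rightarrow> fock \<Rightarrow> fock" where
  "component \<mu> f = Poly_Mapping.map (\<lambda>p. single \<mu> (lookup p \<mu>)) f"

lemma lookup_component: "lookup (component \<mu> f) T = single \<mu> (lookup (lookup f T) \<mu>)"
  unfolding component_def by (simp add: map.rep_eq when_def)

lemma component_add: "component \<mu> (f + g) = component \<mu> f + component \<mu> g"
  by (rule fock_eqI) (simp add: lookup_component lookup_add single_add)
lemma component_0[simp]: "component \<mu> 0 = 0"
  by (rule fock_eqI) (simp add: lookup_component)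
lemma component_sum: "component \<mu> (sum g A) = (\<Sum>i\<in>A. component \<mu> (g i))"
  by (induction A rule: infinite_finite_induct) (auto simp: component_add)
lemma component_rpsi: "component \<mu> (rpsi x f) = rpsi x (component \<mu> f)"
  by (rule fock_eqI) (simp add: lookup_component lookup_rpsi lookup_fsign fsign_def single_uminus)
lemma component_dmul_const: "component \<mu> (dmul (single 0 c) f) = dmul (single 0 c) (component \<mu> f)"
  by (rule fock_eqI) (simp add: lookup_component mult_map_scale_conv_mult[symmetric] mult_single map.rep_eq when_def)

lemma component_Esum: "component \<mu> (Esum N f) = Esum N (component \<mu> f)"
  unfolding Esum_def pair_up_def by (simp add: component_sum component_dmul_const component_rpsi)

lemma component_zero: "(\<And>T. lookup (lookup f T) \<mu> = 0) \<Longrightarrow> component \<mu> f = 0"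
  by (rule fock_eqI) (simp add: lookup_component)

lemma all_keys_component: "all_keys P f \<Longrightarrow> all_keys P (component \<mu> f)"
  unfolding all_keys_def by (auto simp: in_keys_iff lookup_component)

lemma Cop_injective:
  assumes o: "odd m" and m: "m \<le> -3" and f: "f \<in> DH m" and c: "Cop f = 0"
  shows "f = 0"
proof (rule ccontr)
  assume nz: "f \<noteq> 0"
  obtain N where b: "windowed N f" using DH_windowed[OF f] by blast
  have EG: "Esum N f = Gsum N f" using c Cop_eq_Csum[OF b] Csum_eq_Esum_minus_Gsum by simp
  obtain T1 where "lookup f T1 \<noteq> 0" using nz by (metis fock_eqI lookup_zero)
  then obtain \<mu>1 where "lookup (lookup f T1) \<mu>1 \<noteq> 0" by (metis lookup_zero poly_mapping_eqI)
  then have ex: "\<exists>d T \<mu>. lookup (lookup f T) \<mu> \<noteq> 0 \<and> mdegree \<mu> = d" by blast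
  define d where "d = (LEAST d. \<exists>T \<mu>. lookup (lookup f T) \<mu> \<noteq> 0 \<and> mdegree \<mu> = d)"
  obtain T0 \<mu>0 where n0: "lookup (lookup f T0) \<mu>0 \<noteq> 0" "mdegree \<mu>0 = d"
    using LeastI_ex[OF ex] unfolding d_def by blast
  have md: "degree_ge d f" unfolding degree_ge_def d_def by (auto intro: Least_le)
  have "degree_ge (d + 2) (Gsum N f)" by (rule degree_ge_Gsum[OF md])
  then have "\<And>T. lookup (lookup (Gsum N f) T) \<mu>0 = 0" unfolding degree_ge_def using n0(2) by fastforce
  then have "component \<mu>0 (Gsum N f) = 0" by (rule component_zero)
  then have "Esum N (component \<mu>0 f) = 0" using EG component_Esum by metis
  moreover have "component \<mu>0 f \<in> DH m" using f unfolding DH_iff_all_keys by (rule all_keys_component)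
  moreover have "windowed N (component \<mu>0 f)" using b by (rule all_keys_component)
  ultimately have "component \<mu>0 f = 0" using Esum_injective[OF o m] by blast
  then have "lookup (lookup (component \<mu>0 f) T0) \<mu>0 = 0" by simp
  then show False using n0(1) by (simp add: lookup_component)
qed

section \<open>Exactness\<close>

lemma windowed_common: "f \<in> DH m \<Longrightarrow> g \<in> DH m' \<Longrightarrow> \<exists>N. windowed N f \<and> windowed N g"
proof -
  assume "f \<in> DH m" "g \<in> DH m'"
  then obtain N1 N2 where "windowed N1 f" "windowed N2 g" using DH_windowed by blast
  then have "windowed (max N1 N2) f" "windowed (max N1 N2) g" by (auto intro: windowed_mono)
  then show ?thesis by blast
qed

lemma Qop_DH: "odd m \<Longrightarrow> f \<in> DH m \<Longrightarrow> Qop f \<in> DH (m + 2)"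
  using DH_windowed Qop_eq_Qsum DH_Qsum by metis
lemma Cop_DH: "odd m \<Longrightarrow> f \<in> DH m \<Longrightarrow> Cop f \<in> DH (m + 4)"
  using DH_windowed Cop_eq_Csum DH_Csum by metis

lemma Qop_diff: "f \<in> DH m \<Longrightarrow> g \<in> DH m' \<Longrightarrow> Qop (f - g) = Qop f - Qop g"
proof -
  assume "f \<in> DH m" "g \<in> DH m'"
  then obtain N where b: "windowed N f" "windowed N g" using windowed_common by blast
  then have "windowed N (f - g)" by (rule all_keys_diff)
  then show ?thesis using b by (simp add: Qop_eq_Qsum Qsum_diff)
qed
lemma Qop_add: "f \<in> DH m \<Longrightarrow> g \<in> DH m' \<Longrightarrow> Qop (f + g) = Qop f + Qop g"
proof -
  assume "f \<in> DH m" "g \<in> DH m'"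
  then obtain N where b: "windowed N f" "windowed N g" using windowed_common by blast
  then have "windowed N (f + g)" by (rule all_keys_add)
  then show ?thesis using b by (simp add: Qop_eq_Qsum Qsum_add)
qed

lemma Qop_Qop: "f \<in> DH m \<Longrightarrow> Qop (Qop f) = 0"
proof -
  assume f: "f \<in> DH m"
  obtain N where b: "windowed N f" using DH_windowed[OF f] by blast
  have "Qop (Qop f) = Qsum N (Qsum N f)" using Qop_eq_Qsum[OF b] Qop_eq_Qsum[OF windowed_Qsum[OF b]] by simp
  then show ?thesis using Qsum_Qsum[OF DH_finite_states[OF f]] by simp
qed

lemma Qop_Cop_comm: "f \<in> DH m \<Longrightarrow> Qop (Cop f) = Cop (Qop f)"
proof -
  assume f: "f \<in> DH m"
  obtain N where b: "windowed N f" using DH_windowed[OF f] by blast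
  have "Qop (Cop f) = Qsum N (Csum N f)" using Cop_eq_Csum[OF b] Qop_eq_Qsum[OF windowed_Csum[OF b]] by simp
  also have "\<dots> = Csum N (Qsum N f)" by (rule Qsum_Csum_comm[OF DH_finite_states[OF f]])
  also have "\<dots> = Cop (Qop f)" using Qop_eq_Qsum[OF b] Cop_eq_Csum[OF windowed_Qsum[OF b]] by simp
  finally show ?thesis .
qed

lemma Qop_kernel_mod_Cop:
  assumes o: "odd m" and m: "m \<le> -3" and v: "v \<in> DH m" and w: "w \<in> DH (m - 2)"
    and vw: "Qop v = Cop w"
  shows "\<exists>u w'. v = Qop u + Cop w' \<and> u \<in> DH (m - 2) \<and> w' \<in> DH (m - 4)"
proof -
  have o2: "odd (m - 2)" "odd (m - 4)" using o by simp_all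
  have "Cop (Qop w) = 0" using Qop_Cop_comm[OF w] vw Qop_Qop[OF v] by simp
  then have "Qop w = 0" using Cop_injective[OF o m] Qop_DH[OF o2(1) w] by simp
  then obtain w' where w': "w' \<in> DH (m - 4)" "Qop w' = w"
    using Qop_exact[OF o2(1) _ w] m by (auto simp: algebra_simps)
  have cw': "Cop w' \<in> DH m" using Cop_DH[OF o2(2) w'(1)] by simp
  have "Qop (v - Cop w') = Qop v - Qop (Cop w')" by (rule Qop_diff[OF v cw'])
  also have "\<dots> = 0" using vw Qop_Cop_comm[OF w'(1)] w'(2) by simp
  finally obtain u where "u \<in> DH (m - 2)" "Qop u = v - Cop w'"
    using Qop_exact[OF o m DH_diff[OF v cw']] by blast
  then show ?thesis using w'(1) by (metis diff_add_cancel)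
qed

lemma Qop_Cop_image:
  assumes o: "odd m" and u: "u \<in> DH (m - 2)" and w: "w \<in> DH (m - 4)"
  shows "Qop u + Cop w \<in> DH m" "Qop (Qop u + Cop w) = Cop (Qop w)" "Qop w \<in> DH (m - 2)"
proof -
  have o2: "odd (m - 2)" "odd (m - 4)" using o by simp_all
  have qu: "Qop u \<in> DH m" and cw: "Cop w \<in> DH m"
    using Qop_DH[OF o2(1) u] Cop_DH[OF o2(2) w] by simp_all
  show "Qop u + Cop w \<in> DH m" by (rule DH_add[OF qu cw])
  show "Qop (Qop u + Cop w) = Cop (Qop w)"
    using Qop_add[OF qu cw] Qop_Qop[OF u] Qop_Cop_comm[OF w] by simp
  show "Qop w \<in> DH (m - 2)" using Qop_DH[OF o2(2) w] by simp
qed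

theorem proposition1:
  shows "(\<forall>m::int. odd m \<and> m \<le> -3 \<longrightarrow>
           {v \<in> DH m. Qop v \<in> Cop ` DH (m - 2)}
             = {Qop u + Cop w | u w. u \<in> DH (m - 2) \<and> w \<in> DH (m - 4)})
       \<and> {v \<in> DH (-1). v \<in> {Qop u + Cop w | u w. u \<in> DH (-3) \<and> w \<in> DH (-5)}}
             = {Qop u + Cop w | u w. u \<in> DH (-3) \<and> w \<in> DH (-5)}"
proof
  show "\<forall>m::int. odd m \<and> m \<le> -3 \<longrightarrow>
           {v \<in> DH m. Qop v \<in> Cop ` DH (m - 2)}
             = {Qop u + Cop w | u w. u \<in> DH (m - 2) \<and> w \<in> DH (m - 4)}"
    using Qop_kernel_mod_Cop Qop_Cop_image by fast
  show "{v \<in> DH (-1). v \<in> {Qop u + Cop w | u w. u \<in> DH (-3) \<and> w \<in> DH (-5)}}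
             = {Qop u + Cop w | u w. u \<in> DH (-3) \<and> w \<in> DH (-5)}"
    using Qop_Cop_image(1)[of "-1"] by auto
qed

end
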